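(* For any abstract unsigned GKM$_3$ graph $\Gamma$, the poset $S_2(\Gamma)$ of faces of $\Gamma$ of valence at most $2$, ordered by inclusion, is the cell poset of a regular CW complex.
   Context: Graphs are finite, connected, $n$-valent, without loops, with oriented edges $e$ (initial vertex $i(e)$, terminal $t(e)$, reverse $\overline e$). An abstract unsigned GKM graph with $T$-labeling consists of such a graph, a connection $\nabla$ (bijections $\nabla_e$ from edges at $i(e)$ to edges at $t(e)$ with $\nabla_e e=\overline e$, $\nabla_{\overline e}=\nabla_e^{-1}$) and $\alpha\colon E\to H^2(BT;\mathbb Z)/\{\pm1\}$ with $\alpha(\overline e)=\alpha(e)$, $\alpha(\nabla_e e')\equiv\pm\alpha(e')\bmod \alpha(e)$ for edges $e,e'$ with common origin, and values spanning $H^2(BT;\mathbb Z)$. It is GKM$_3$ if at every vertex any at most $3$ pairwise distinct values $\alpha(e)$, $i(e)=v$, are linearly independent. A face of valence $i$ is a connected $i$-valent subgraph invariant under the connection along its edges (for an edge $e$ of the face, $\nabla_e$ maps edges of the face at $i(e)$ to edges of the face at $t(e)$); $0$-faces are vertices, $1$-faces are edges. *)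

theory Defs
  imports "HOL-Analysis.Analysis"
begin

text \<open>H^2(BT;Z) is modelled as the lattice 'k => int for a finite index type 'k
  (T a torus of rank CARD('k)); alpha picks a representative of the class in
  H^2(BT;Z)/{+-1}, all conditions being stated up to sign.\<close>

definition out_edges :: "'e set \<Rightarrow> ('e \<Rightarrow> 'v) \<Rightarrow> 'v \<Rightarrow> 'e set" where
  "out_edges E src v = {e \<in> E. src e = v}"

definition edge_rel :: "'e set \<Rightarrow> ('e \<Rightarrow> 'v) \<Rightarrow> ('e \<Rightarrow> 'v) \<Rightarrow> ('v \<times> 'v) set" where
  "edge_rel F src tgt = {(src e, tgt e) | e. e \<in> F}"

definition connected_on :: "'v set \<Rightarrow> 'e set \<Rightarrow> ('e \<Rightarrow> 'v) \<Rightarrow> ('e \<Rightarrow> 'v) \<Rightarrow> bool" where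
  "connected_on W F src tgt \<longleftrightarrow> W \<noteq> {} \<and>
     (\<forall>x\<in>W. \<forall>y\<in>W. (x, y) \<in> (edge_rel F src tgt)\<^sup>*)"

definition eq_pm :: "('k \<Rightarrow> int) \<Rightarrow> ('k \<Rightarrow> int) \<Rightarrow> bool" where
  "eq_pm a b \<longleftrightarrow> a = b \<or> a = - b"

definition cong_pm_mod :: "('k \<Rightarrow> int) \<Rightarrow> ('k \<Rightarrow> int) \<Rightarrow> ('k \<Rightarrow> int) \<Rightarrow> bool" where
  "cong_pm_mod b' b a \<longleftrightarrow> (\<exists>c::int. b' = (\<lambda>j. b j + c * a j) \<or> b' = (\<lambda>j. - b j + c * a j))"

definition int_lin_indep :: "'e set \<Rightarrow> ('e \<Rightarrow> ('k \<Rightarrow> int)) \<Rightarrow> bool" where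
  "int_lin_indep S f \<longleftrightarrow>
     (\<forall>c :: 'e \<Rightarrow> int. (\<lambda>j. \<Sum>e\<in>S. c e * f e j) = (\<lambda>j. 0) \<longrightarrow> (\<forall>e\<in>S. c e = 0))"

definition int_spans :: "'e set \<Rightarrow> ('e \<Rightarrow> ('k \<Rightarrow> int)) \<Rightarrow> bool" where
  "int_spans S f \<longleftrightarrow> (\<forall>x :: 'k \<Rightarrow> int. \<exists>c :: 'e \<Rightarrow> int. x = (\<lambda>j. \<Sum>e\<in>S. c e * f e j))"

definition abstract_gkm_graph ::
  "'v set \<Rightarrow> 'e set \<Rightarrow> ('e \<Rightarrow> 'v) \<Rightarrow> ('e \<Rightarrow> 'v) \<Rightarrow> ('e \<Rightarrow> 'e) \<Rightarrow> nat
   \<Rightarrow> ('e \<Rightarrow> 'e \<Rightarrow> 'e) \<Rightarrow> ('e \<Rightarrow> ('k::finite \<Rightarrow> int)) \<Rightarrow> bool" where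
  "abstract_gkm_graph V E src tgt rv n nabla alpha \<longleftrightarrow>
     \<comment> \<open>finite, connected, n-valent graph without loops, with oriented edges\<close>
     finite V \<and> finite E \<and>
     (\<forall>e\<in>E. src e \<in> V \<and> tgt e \<in> V \<and> src e \<noteq> tgt e \<and>
        rv e \<in> E \<and> rv (rv e) = e \<and> src (rv e) = tgt e \<and> tgt (rv e) = src e) \<and>
     connected_on V E src tgt \<and>
     (\<forall>v\<in>V. card (out_edges E src v) = n) \<and>
     \<comment> \<open>connection\<close>
     (\<forall>e\<in>E. bij_betw (nabla e) (out_edges E src (src e)) (out_edges E src (tgt e)) \<and>
        nabla e e = rv e \<and>
        (\<forall>e'\<in>out_edges E src (src e). nabla (rv e) (nabla e e') = e')) \<and>
     \<comment> \<open>axial function\<close>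
     (\<forall>e\<in>E. eq_pm (alpha (rv e)) (alpha e)) \<and>
     (\<forall>e\<in>E. \<forall>e'\<in>out_edges E src (src e). cong_pm_mod (alpha (nabla e e')) (alpha e') (alpha e)) \<and>
     int_spans E alpha"

definition gkm3 :: "'v set \<Rightarrow> 'e set \<Rightarrow> ('e \<Rightarrow> 'v) \<Rightarrow> ('e \<Rightarrow> ('k \<Rightarrow> int)) \<Rightarrow> bool" where
  "gkm3 V E src alpha \<longleftrightarrow>
     (\<forall>v\<in>V. \<forall>S. S \<subseteq> out_edges E src v \<longrightarrow> card S \<le> 3 \<longrightarrow>
        (\<forall>e\<in>S. \<forall>e'\<in>S. e \<noteq> e' \<longrightarrow> \<not> eq_pm (alpha e) (alpha e')) \<longrightarrow>
        int_lin_indep S alpha)"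

definition is_face ::
  "'v set \<Rightarrow> 'e set \<Rightarrow> ('e \<Rightarrow> 'v) \<Rightarrow> ('e \<Rightarrow> 'v) \<Rightarrow> ('e \<Rightarrow> 'e) \<Rightarrow> ('e \<Rightarrow> 'e \<Rightarrow> 'e)
   \<Rightarrow> nat \<Rightarrow> 'v set \<times> 'e set \<Rightarrow> bool" where
  "is_face V E src tgt rv nabla i WF \<longleftrightarrow>
     (let W = fst WF; F = snd WF in
       W \<subseteq> V \<and> F \<subseteq> E \<and>
       (\<forall>e\<in>F. src e \<in> W \<and> tgt e \<in> W \<and> rv e \<in> F) \<and>
       connected_on W F src tgt \<and>
       (\<forall>w\<in>W. card (out_edges F src w) = i) \<and>
       (\<forall>e\<in>F. \<forall>e'\<in>out_edges F src (src e). nabla e e' \<in> F))"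

definition S2 ::
  "'v set \<Rightarrow> 'e set \<Rightarrow> ('e \<Rightarrow> 'v) \<Rightarrow> ('e \<Rightarrow> 'v) \<Rightarrow> ('e \<Rightarrow> 'e) \<Rightarrow> ('e \<Rightarrow> 'e \<Rightarrow> 'e)
   \<Rightarrow> ('v set \<times> 'e set) set" where
  "S2 V E src tgt rv nabla = {WF. \<exists>i\<le>2. is_face V E src tgt rv nabla i WF}"

definition subgraph_le :: "'v set \<times> 'e set \<Rightarrow> 'v set \<times> 'e set \<Rightarrow> bool" where
  "subgraph_le A B \<longleftrightarrow> fst A \<subseteq> fst B \<and> snd A \<subseteq> snd B"

definition closed_disc :: "nat \<Rightarrow> (nat \<Rightarrow> real) set" where
  "closed_disc d = {x \<in> topspace (Euclidean_space d). (\<Sum>j<d. (x j)\<^sup>2) \<le> 1}"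

definition open_disc :: "nat \<Rightarrow> (nat \<Rightarrow> real) set" where
  "open_disc d = {x \<in> topspace (Euclidean_space d). (\<Sum>j<d. (x j)\<^sup>2) < 1}"

text \<open>X with the finite set of cells C is a (finite) regular CW complex:
  X Hausdorff, the cells partition X, each closed cell is homeomorphic to a closed
  ball by a homeomorphism carrying the open ball onto the cell, and the boundary of
  each cell is a union of cells.  (For finitely many cells closure-finiteness and the
  weak topology condition are automatic.)\<close>
definition regular_CW_complex :: "'a topology \<Rightarrow> 'a set set \<Rightarrow> bool" where
  "regular_CW_complex X C \<longleftrightarrow>
     Hausdorff_space X \<and> finite C \<and>
     (\<forall>c\<in>C. c \<noteq> {} \<and> c \<subseteq> topspace X) \<and>
     (\<forall>c\<in>C. \<forall>c'\<in>C. c \<noteq> c' \<longrightarrow> c \<inter> c' = {}) \<and>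
     \<Union>C = topspace X \<and>
     (\<forall>c\<in>C. \<exists>d h. homeomorphic_map (subtopology (Euclidean_space d) (closed_disc d))
                      (subtopology X (X closure_of c)) h \<and> h ` open_disc d = c) \<and>
     (\<forall>c\<in>C. \<exists>B\<subseteq>C. X closure_of c - c = \<Union>B)"

text \<open>The space is taken on
  the carrier type nat => real (every finite CW complex embeds in some R^N).\<close>
definition is_cell_poset_of_regular_CW :: "'p set \<Rightarrow> ('p \<Rightarrow> 'p \<Rightarrow> bool) \<Rightarrow> bool" where
  "is_cell_poset_of_regular_CW P le \<longleftrightarrow>
     (\<exists>(X :: (nat \<Rightarrow> real) topology) C \<phi>. regular_CW_complex X C \<and> bij_betw \<phi> P C \<and>
        (\<forall>p\<in>P. \<forall>q\<in>P. le p q \<longleftrightarrow> \<phi> p \<subseteq> X closure_of \<phi> q))"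

end

theory Submission
  imports Defs
begin

text \<open>Every face of valence at most two is a vertex, an edge, or a cycle of \<open>k \<ge> 2\<close> edges (walk
  around it by always leaving a vertex along the other face edge), and a face contained in a face
  of the same valence equals it.  Hence the faces below a 2-face are exactly its vertices and
  edges.  The poset is realised in \<open>\<real>\<^sup>N\<close> with one coordinate per face: a vertex is a basis
  vector, an edge is the broken segment from one endpoint through its own basis vector to the
  other, and a 2-face is the cone from its own basis vector over the polygon of its vertices and
  edges.  The coordinate of a face is nonzero on its open cell and vanishes on every closed cell
  not above it, so the open cells are disjoint and closure inclusion is subgraph inclusion.\<close>

section \<open>Discs\<close>

lemma open_disc_subset_closed_disc: "open_disc d \<subseteq> closed_disc d"
  by (auto simp: open_disc_def closed_disc_def)

lemma zero_in_open_disc: "(\<lambda>_. 0) \<in> open_disc d"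
  by (simp add: open_disc_def topspace_Euclidean_space)

lemma closed_disc_0: "closed_disc 0 = {\<lambda>_. 0}"
  by (auto simp: closed_disc_def topspace_Euclidean_space)

lemma compact_closed_disc: "compact (closed_disc d)"
proof -
  define B :: "(nat \<Rightarrow> real) set" where "B = Pi UNIV (\<lambda>i. if i < d then {-1..1} else {0})"
  have "compactin (product_topology (\<lambda>_. euclideanreal) UNIV) B"
    by (simp add: B_def compactin_PiE flip: PiE_UNIV_domain)
  then have "compact B"
    by (simp add: euclidean_product_topology compactin_euclidean_iff)
  moreover have "closed (closed_disc d)"
  proof -
    have "closed (\<Inter>i\<in>{d..}. {x :: nat \<Rightarrow> real. x i = 0})"
      by (intro closed_INT ballI closed_Collect_eq continuous_on_product_coordinates continuous_on_const)
    moreover have "closed {x :: nat \<Rightarrow> real. (\<Sum>j<d. (x j)\<^sup>2) \<le> 1}"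
      by (intro closed_Collect_le continuous_intros continuous_on_subset[OF continuous_on_product_coordinates]) auto
    moreover have "closed_disc d = (\<Inter>i\<in>{d..}. {x. x i = 0}) \<inter> {x. (\<Sum>j<d. (x j)\<^sup>2) \<le> 1}"
      by (auto simp: closed_disc_def topspace_Euclidean_space)
    ultimately show ?thesis by (simp add: closed_Int)
  qed
  moreover have "closed_disc d \<subseteq> B"
  proof
    fix x assume x: "x \<in> closed_disc d"
    have "\<bar>x i\<bar> \<le> 1" if "i < d" for i
    proof -
      have "(x i)\<^sup>2 \<le> (\<Sum>j<d. (x j)\<^sup>2)"
        using that by (intro member_le_sum) auto
      then show ?thesis using x by (simp add: closed_disc_def flip: abs_square_le_1)
    qed
    then show "x \<in> B" using x by (auto simp: B_def closed_disc_def topspace_Euclidean_space abs_le_iff)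
  qed
  ultimately show ?thesis
    by (metis compact_Int_closed inf.absorb_iff2)
qed

lemma closed_disc_subset_closure_open_disc: "closed_disc d \<subseteq> closure (open_disc d)"
proof
  fix x assume x: "x \<in> closed_disc d"
  define g where "g = (\<lambda>t::real. (\<lambda>i. t * x i))"
  have "g ` {0..<1} \<subseteq> open_disc d"
  proof
    fix y assume "y \<in> g ` {0..<1}"
    then obtain t where t: "0 \<le> t" "t < 1" "y = g t" by auto
    have "(\<Sum>j<d. (y j)\<^sup>2) = t\<^sup>2 * (\<Sum>j<d. (x j)\<^sup>2)"
      by (simp add: t(3) g_def power_mult_distrib sum_distrib_left)
    also have "\<dots> \<le> t\<^sup>2" using x by (intro mult_left_le) (auto simp: closed_disc_def)
    also have "\<dots> < 1" using t by (simp add: abs_square_less_1)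
    finally show "y \<in> open_disc d"
        using x by (auto simp: open_disc_def closed_disc_def topspace_Euclidean_space g_def t(3))
  qed
  moreover have "g ` closure {0..<1} \<subseteq> closure (g ` {0..<1})"
    by (rule continuous_image_closure_subset[of UNIV]) (auto simp: g_def intro!: continuous_intros)
  moreover have "x = g 1" "1 \<in> closure {0..<1::real}" by (auto simp: g_def)
  ultimately show "x \<in> closure (open_disc d)" by (metis closure_mono image_eqI subsetD)
qed

lemma closure_image_open_disc:
  fixes h :: "(nat \<Rightarrow> real) \<Rightarrow> 'a::t2_space"
  assumes "continuous_on (closed_disc d) h"
  shows "closure (h ` open_disc d) = h ` closed_disc d"
proof
  have "compact (h ` closed_disc d)"
    using compact_continuous_image[OF assms compact_closed_disc] .
  then show "closure (h ` open_disc d) \<subseteq> h ` closed_disc d"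
    by (rule closure_minimal[OF image_mono[OF open_disc_subset_closed_disc] compact_imp_closed])
  have "closure (open_disc d) \<subseteq> closed_disc d"
    by (intro closure_minimal open_disc_subset_closed_disc compact_imp_closed compact_closed_disc)
  then have "h ` closure (open_disc d) \<subseteq> closure (h ` open_disc d)"
    by (rule continuous_image_closure_subset[OF assms])
  then show "h ` closed_disc d \<subseteq> closure (h ` open_disc d)"
    using closed_disc_subset_closure_open_disc by blast
qed

lemma homeomorphic_map_closed_disc:
  fixes h :: "(nat \<Rightarrow> real) \<Rightarrow> 'a::metric_space"
  assumes "continuous_on (closed_disc d) h" and "inj_on h (closed_disc d)"
  shows "homeomorphic_map (subtopology (Euclidean_space d) (closed_disc d))
           (top_of_set (h ` closed_disc d)) h"
proof -
  have "closed_disc d \<subseteq> topspace (Euclidean_space d)"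
    by (auto simp: closed_disc_def)
  then have "subtopology (Euclidean_space d) (closed_disc d) = top_of_set (closed_disc d)"
    by (simp add: Euclidean_space_def euclidean_product_topology subtopology_subtopology Int_absorb1)
  moreover have "homeomorphic_map (top_of_set (closed_disc d)) (top_of_set (h ` closed_disc d)) h"
  proof (rule continuous_imp_homeomorphic_map)
    show "compact_space (top_of_set (closed_disc d))"
      by (simp add: compact_space_subtopology compact_closed_disc)
  qed (use assms in \<open>auto simp: continuous_map_in_subtopology Hausdorff_space_subtopology\<close>)
  ultimately show ?thesis by simp
qed

section \<open>Regular CW complexes from marked cells\<close>

definition marked_cell :: "'p set \<Rightarrow> ('p \<Rightarrow> 'p \<Rightarrow> bool) \<Rightarrow> ('p \<Rightarrow> nat) \<Rightarrow>
    ('p \<Rightarrow> (nat \<Rightarrow> real) \<Rightarrow> nat \<Rightarrow> real) \<Rightarrow> ('p \<Rightarrow> nat) \<Rightarrow> 'p \<Rightarrow> bool" where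
  "marked_cell P le d h \<kappa> p \<longleftrightarrow>
     continuous_on (closed_disc (d p)) (h p) \<and> inj_on (h p) (closed_disc (d p)) \<and>
     h p ` closed_disc (d p) = (\<Union>q\<in>{q\<in>P. le q p}. h q ` open_disc (d q)) \<and>
     (\<forall>y\<in>h p ` closed_disc (d p). \<forall>i. y i \<noteq> 0 \<longrightarrow> i \<in> \<kappa> ` {q\<in>P. le q p}) \<and>
     (\<forall>y\<in>h p ` open_disc (d p). y (\<kappa> p) \<noteq> 0)"

text \<open>Distinct marker coordinates make the open cells disjoint and turn inclusion in closures
  into the order.\<close>

locale marked_cells =
  fixes P :: "'p set" and le :: "'p \<Rightarrow> 'p \<Rightarrow> bool" and d :: "'p \<Rightarrow> nat"
    and h :: "'p \<Rightarrow> (nat \<Rightarrow> real) \<Rightarrow> nat \<Rightarrow> real" and \<kappa> :: "'p \<Rightarrow> nat"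
  assumes finite: "finite P" and inj_marker: "inj_on \<kappa> P"
    and antisym: "\<And>p q. p \<in> P \<Longrightarrow> q \<in> P \<Longrightarrow> le p q \<Longrightarrow> le q p \<Longrightarrow> p = q"
    and marked: "\<And>p. p \<in> P \<Longrightarrow> marked_cell P le d h \<kappa> p"
begin

definition open_cell :: "'p \<Rightarrow> (nat \<Rightarrow> real) set" where
  "open_cell p = h p ` open_disc (d p)"

definition closed_cell :: "'p \<Rightarrow> (nat \<Rightarrow> real) set" where
  "closed_cell p = h p ` closed_disc (d p)"

abbreviation space :: "(nat \<Rightarrow> real) topology" where
  "space \<equiv> top_of_set (\<Union>(open_cell ` P))"

lemma closed_cell_eq: "p \<in> P \<Longrightarrow> closed_cell p = (\<Union>q\<in>{q\<in>P. le q p}. open_cell q)"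
  using marked by (simp add: marked_cell_def open_cell_def closed_cell_def)

lemma open_cell_subset: "open_cell p \<subseteq> closed_cell p"
  using open_disc_subset_closed_disc by (auto simp: open_cell_def closed_cell_def)

lemma open_cell_nonempty: "open_cell p \<noteq> {}"
  using zero_in_open_disc by (auto simp: open_cell_def)

lemma
  assumes "p \<in> P"
  shows continuous_on_cell: "continuous_on (closed_disc (d p)) (h p)"
    and inj_on_cell: "inj_on (h p) (closed_disc (d p))"
    and closed_cell_support: "\<And>y i. y \<in> closed_cell p \<Longrightarrow> y i \<noteq> 0 \<Longrightarrow> i \<in> \<kappa> ` {q\<in>P. le q p}"
    and open_cell_marker: "\<And>y. y \<in> open_cell p \<Longrightarrow> y (\<kappa> p) \<noteq> 0"
  using marked[OF assms] unfolding marked_cell_def open_cell_def closed_cell_def by blast+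

lemma le_if_meets:
  assumes "p \<in> P" "q \<in> P" "y \<in> open_cell p" "y \<in> closed_cell q"
  shows "le p q"
proof -
  have "\<kappa> p \<in> \<kappa> ` {r\<in>P. le r q}"
    using closed_cell_support[OF assms(2,4)] open_cell_marker[OF assms(1,3)] by blast
  then show ?thesis using inj_marker assms(1) by (auto dest: inj_onD)
qed

lemma open_cells_disjoint: "p \<in> P \<Longrightarrow> q \<in> P \<Longrightarrow> y \<in> open_cell p \<Longrightarrow> y \<in> open_cell q \<Longrightarrow> p = q"
  using le_if_meets open_cell_subset antisym by blast

lemma closure_of_open_cell: "p \<in> P \<Longrightarrow> space closure_of open_cell p = closed_cell p"
proof -
  assume p: "p \<in> P"
  have "open_cell p \<subseteq> \<Union>(open_cell ` P)" "closed_cell p \<subseteq> \<Union>(open_cell ` P)"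
    using closed_cell_eq[OF p] p by blast+
  moreover have "closure (open_cell p) = closed_cell p"
    unfolding open_cell_def closed_cell_def by (rule closure_image_open_disc[OF continuous_on_cell[OF p]])
  ultimately show ?thesis
    by (simp add: closure_of_subtopology Int_absorb1 Int_absorb2)
qed

lemma regular_CW_complex: "regular_CW_complex space (open_cell ` P)"
  unfolding regular_CW_complex_def
proof (intro conjI ballI)
  fix c assume "c \<in> open_cell ` P"
  then obtain p where p: "p \<in> P" "c = open_cell p" by auto
  show "c \<noteq> {}" "c \<subseteq> topspace space" using open_cell_nonempty p by auto
  have "closed_cell p \<subseteq> \<Union>(open_cell ` P)" using closed_cell_eq[OF p(1)] by blast
  then have "subtopology space (space closure_of c) = top_of_set (closed_cell p)"
    using p closure_of_open_cell by (simp add: subtopology_subtopology Int_absorb1)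
  then show "\<exists>d h. homeomorphic_map (subtopology (Euclidean_space d) (closed_disc d))
               (subtopology space (space closure_of c)) h \<and> h ` open_disc d = c"
    using homeomorphic_map_closed_disc[OF continuous_on_cell inj_on_cell, OF p(1) p(1)] p(2)
    unfolding open_cell_def closed_cell_def by metis
  have "closed_cell p - open_cell p = \<Union>(open_cell ` {q\<in>P. le q p \<and> q \<noteq> p})"
    using closed_cell_eq[OF p(1)] open_cells_disjoint p(1) by blast
  moreover have "open_cell ` {q\<in>P. le q p \<and> q \<noteq> p} \<subseteq> open_cell ` P" by blast
  ultimately show "\<exists>B\<subseteq>open_cell ` P. space closure_of c - c = \<Union>B"
    using p closure_of_open_cell by metis
next
  fix c c' assume "c \<in> open_cell ` P" "c' \<in> open_cell ` P"
  then show "c \<noteq> c' \<longrightarrow> c \<inter> c' = {}" using open_cells_disjoint by blast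
qed (use finite in \<open>simp_all add: Hausdorff_space_subtopology\<close>)

lemma is_cell_poset: "is_cell_poset_of_regular_CW P le"
proof -
  have "bij_betw open_cell P (open_cell ` P)"
    unfolding bij_betw_def inj_on_def using open_cells_disjoint open_cell_nonempty by blast
  moreover have "le p q \<longleftrightarrow> open_cell p \<subseteq> space closure_of open_cell q" if "p \<in> P" "q \<in> P" for p q
  proof
    assume "le p q"
    then show "open_cell p \<subseteq> space closure_of open_cell q"
      using closure_of_open_cell[OF that(2)] closed_cell_eq[OF that(2)] that(1) by blast
  next
    assume "open_cell p \<subseteq> space closure_of open_cell q"
    then show "le p q"
      using closure_of_open_cell[OF that(2)] le_if_meets[OF that] open_cell_nonempty by blast
  qed
  ultimately show ?thesis
    unfolding is_cell_poset_of_regular_CW_def using regular_CW_complex by blast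
qed

end

section \<open>Broken segments\<close>

definition basis_vec :: "nat \<Rightarrow> nat \<Rightarrow> real" where
  "basis_vec a = (\<lambda>i. if i = a then 1 else 0)"

lemma continuous_on_coordinate [continuous_intros]: "continuous_on S (\<lambda>x::nat \<Rightarrow> real. x i)"
  by (rule continuous_on_subset[OF continuous_on_product_coordinates subset_UNIV])

lemma continuous_at_coordinate [continuous_intros]:
  "continuous (at x within S) (\<lambda>y::nat \<Rightarrow> real. y i)"
proof -
  have "isCont (\<lambda>y::nat \<Rightarrow> real. y i) x"
    using continuous_on_eq_continuous_at[OF open_UNIV, of "\<lambda>y::nat \<Rightarrow> real. y i"] by simp
  then show ?thesis by (rule continuous_at_imp_continuous_within)
qed

lemma closed_disc_1_iff: "x \<in> closed_disc 1 \<longleftrightarrow> (\<forall>i\<ge>1. x i = 0) \<and> \<bar>x 0\<bar> \<le> 1"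
  by (simp add: closed_disc_def topspace_Euclidean_space abs_square_le_1)

lemma open_disc_1_iff: "x \<in> open_disc 1 \<longleftrightarrow> (\<forall>i\<ge>1. x i = 0) \<and> \<bar>x 0\<bar> < 1"
  by (simp add: open_disc_def topspace_Euclidean_space abs_square_less_1)

lemma inj_on_coordinate_0_closed_disc_1: "inj_on (\<lambda>x. x 0) (closed_disc 1)"
proof (rule inj_onI, rule ext)
  fix x y i assume "x \<in> closed_disc 1" "y \<in> closed_disc 1" "x 0 = y 0"
  then show "x i = y i" unfolding closed_disc_1_iff by (cases "i = 0") auto
qed

lemma coordinate_0_image_disc_1:
  "(\<lambda>x. x 0) ` closed_disc 1 = {-1..1}" "(\<lambda>x. x 0) ` open_disc 1 = {-1<..<1}"
proof -
  define e where "e u = (\<lambda>i::nat. if i = 0 then u else 0)" for u :: real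
  have mem: "e u \<in> closed_disc 1 \<longleftrightarrow> \<bar>u\<bar> \<le> 1" "e u \<in> open_disc 1 \<longleftrightarrow> \<bar>u\<bar> < 1" for u
    unfolding closed_disc_1_iff open_disc_1_iff by (simp_all add: e_def)
  have "u \<in> (\<lambda>x. x 0) ` closed_disc 1" if "u \<in> {-1..1}" for u
    by (rule rev_image_eqI[of "e u" _ u "\<lambda>x. x 0"]) (use mem that in \<open>simp_all add: abs_le_iff e_def\<close>)
  moreover have "u \<in> (\<lambda>x. x 0) ` open_disc 1" if "u \<in> {-1<..<1}" for u
    by (rule rev_image_eqI[of "e u" _ u "\<lambda>x. x 0"]) (use mem that in \<open>simp_all add: abs_less_iff e_def\<close>)
  ultimately have "{-1..1} \<subseteq> (\<lambda>x. x 0) ` closed_disc 1" "{-1<..<1} \<subseteq> (\<lambda>x. x 0) ` open_disc 1"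
    by blast+
  moreover have "(\<lambda>x. x 0) ` closed_disc 1 \<subseteq> {-1..1}" "(\<lambda>x. x 0) ` open_disc 1 \<subseteq> {-1<..<1}"
    by (auto simp: closed_disc_1_iff[simplified] open_disc_1_iff[simplified] abs_le_iff abs_less_iff)
  ultimately show "(\<lambda>x. x 0) ` closed_disc 1 = {-1..1}" "(\<lambda>x. x 0) ` open_disc 1 = {-1<..<1}"
    by blast+
qed

text \<open>The path from \<open>e\<^sub>a\<close> (at \<open>u = -1\<close>) through \<open>e\<^sub>m\<close> (at \<open>u = 0\<close>) to \<open>e\<^sub>b\<close> (at \<open>u = 1\<close>),
  \<open>e\<^sub>i\<close> being the \<open>i\<close>-th basis vector.\<close>

definition broken_segment :: "nat \<Rightarrow> nat \<Rightarrow> nat \<Rightarrow> real \<Rightarrow> nat \<Rightarrow> real" where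
  "broken_segment a m b u =
     (\<lambda>i. max 0 (-u) * basis_vec a i + (1 - \<bar>u\<bar>) * basis_vec m i + max 0 u * basis_vec b i)"

lemma continuous_on_broken_segment: "continuous_on S (broken_segment a m b)"
  unfolding broken_segment_def
  by (intro continuous_on_coordinatewise_then_product continuous_on_add continuous_on_mult_right
      continuous_on_max continuous_on_diff continuous_on_rabs continuous_on_minus
      continuous_on_const continuous_on_id)

lemma broken_segment_ends: "broken_segment a m b (-1) = basis_vec a" "broken_segment a m b 1 = basis_vec b"
  by (auto simp: broken_segment_def)

lemma broken_segment_reverse: "broken_segment b m a = broken_segment a m b \<circ> uminus"
  by (intro ext) (simp add: broken_segment_def algebra_simps)

lemma broken_segment_middle: "m \<noteq> a \<Longrightarrow> m \<noteq> b \<Longrightarrow> broken_segment a m b u m = 1 - \<bar>u\<bar>"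
  by (simp add: broken_segment_def basis_vec_def)

lemma broken_segment_support: "broken_segment a m b u i \<noteq> 0 \<Longrightarrow> i \<in> {a, m, b}"
  by (auto simp: broken_segment_def basis_vec_def split: if_splits)

lemma inj_broken_segment:
  assumes "a \<noteq> m" "a \<noteq> b" "m \<noteq> b"
  shows "inj (broken_segment a m b)"
proof (rule injI)
  fix u v assume eq: "broken_segment a m b u = broken_segment a m b v"
  have "\<bar>u\<bar> = \<bar>v\<bar>" using fun_cong[OF eq, of m] assms by (simp add: broken_segment_middle)
  moreover have "max 0 u = max 0 v"
    using fun_cong[OF eq, of b] assms by (simp add: broken_segment_def basis_vec_def)
  ultimately show "u = v" by (auto simp: abs_if max_def split: if_splits)
qed

section \<open>Cones over polygons\<close>

definition planar :: "real \<Rightarrow> real \<Rightarrow> nat \<Rightarrow> real" where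
  "planar u v = (\<lambda>i. if i = 0 then u else if i = 1 then v else 0)"

definition radius :: "(nat \<Rightarrow> real) \<Rightarrow> real" where
  "radius x = sqrt ((x 0)\<^sup>2 + (x 1)\<^sup>2)"

lemma radius_nonneg: "radius x \<ge> 0"
  by (simp add: radius_def)

lemma continuous_at_radius [continuous_intros]: "continuous (at x within S) radius"
  unfolding radius_def by (intro continuous_intros)

lemma continuous_on_radius [continuous_intros]: "continuous_on S radius"
  unfolding radius_def by (intro continuous_intros)

text \<open>Continuity at the origin holds because the bounded factor is multiplied by the radius.\<close>

lemma continuous_on_homogeneous_extension:
  fixes \<Phi> :: "real \<Rightarrow> real \<Rightarrow> real"
  assumes cont: "continuous_on UNIV (\<lambda>p. \<Phi> (fst p) (snd p))" and bound: "\<And>u v. \<bar>\<Phi> u v\<bar> \<le> 1"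
  shows "continuous_on S (\<lambda>x. radius x * \<Phi> (x 0 / radius x) (x 1 / radius x))"
proof -
  have "isCont (\<lambda>x. radius x * \<Phi> (x 0 / radius x) (x 1 / radius x)) x" for x
  proof (cases "radius x = 0")
    case False
    have "isCont (\<lambda>y. (y 0 / radius y, y 1 / radius y)) x"
      using False by (intro continuous_intros) auto
    moreover have "isCont (\<lambda>p. \<Phi> (fst p) (snd p)) (x 0 / radius x, x 1 / radius x)"
      using cont by (simp add: continuous_on_eq_continuous_at)
    ultimately have "isCont (\<lambda>y. \<Phi> (y 0 / radius y) (y 1 / radius y)) x"
      using continuous_at_compose by (fastforce simp: o_def)
    then show ?thesis by (intro continuous_intros)
  next
    case True
    have lim: "(radius \<longlongrightarrow> 0) (at x)"
      using continuous_at_radius[of x UNIV] True by (simp add: isCont_def)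
    have "\<forall>y. norm (radius y * \<Phi> (y 0 / radius y) (y 1 / radius y)) \<le> radius y"
      using mult_left_mono[OF bound radius_nonneg] by (simp add: abs_mult radius_nonneg)
    then have "((\<lambda>y. radius y * \<Phi> (y 0 / radius y) (y 1 / radius y)) \<longlongrightarrow> 0) (at x)"
      by (rule Lim_null_comparison[OF always_eventually lim])
    then show ?thesis using True by (simp add: isCont_def)
  qed
  then show ?thesis by (simp add: continuous_at_imp_continuous_on)
qed

lemma closed_disc_2_iff: "x \<in> closed_disc 2 \<longleftrightarrow> (\<forall>i\<ge>2. x i = 0) \<and> (x 0)\<^sup>2 + (x 1)\<^sup>2 \<le> 1"
  by (simp add: closed_disc_def topspace_Euclidean_space numeral_2_eq_2)

lemma open_disc_2_iff: "x \<in> open_disc 2 \<longleftrightarrow> (\<forall>i\<ge>2. x i = 0) \<and> (x 0)\<^sup>2 + (x 1)\<^sup>2 < 1"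
  by (simp add: open_disc_def topspace_Euclidean_space numeral_2_eq_2)

lemma planar_eqI: "(\<forall>i\<ge>2. x i = 0) \<Longrightarrow> x 0 = u \<Longrightarrow> x 1 = v \<Longrightarrow> x = planar u v"
  by (rule ext) (simp add: planar_def)

lemma polar_sum_squares: "((r::real) * cos \<theta>)\<^sup>2 + (r * sin \<theta>)\<^sup>2 = r\<^sup>2"
  by (simp add: power_mult_distrib flip: distrib_left)

lemma radius_planar_polar: "0 \<le> (r::real) \<Longrightarrow> radius (planar (r * cos \<theta>) (r * sin \<theta>)) = r"
  by (simp add: radius_def planar_def polar_sum_squares)

lemma planar_polar_in_disc:
  assumes "0 \<le> r"
  shows "planar (r * cos \<theta>) (r * sin \<theta>) \<in> closed_disc 2 \<longleftrightarrow> r \<le> 1"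
    and "planar (r * cos \<theta>) (r * sin \<theta>) \<in> open_disc 2 \<longleftrightarrow> r < 1"
  using assms
  by (simp_all add: closed_disc_2_iff open_disc_2_iff planar_def polar_sum_squares
      power_le_one_iff abs_square_le_1 abs_square_less_1)

definition arc_angle :: "nat \<Rightarrow> nat \<Rightarrow> real \<Rightarrow> real" where
  "arc_angle m n t = 2 * pi * (real n + t) / real m"

lemma closed_disc_2_polar:
  assumes x: "x \<in> closed_disc 2" and m: "m \<ge> 1"
  obtains r n t where "0 \<le> r" "r \<le> 1" "n < m" "0 \<le> t" "t < 1"
    "x = planar (r * cos (arc_angle m n t)) (r * sin (arc_angle m n t))"
proof -
  have z: "\<forall>i\<ge>2. x i = 0" and s1: "(x 0)\<^sup>2 + (x 1)\<^sup>2 \<le> 1"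
    using x by (auto simp: closed_disc_2_iff)
  define r where "r = radius x"
  have r0: "0 \<le> r" and r1: "r \<le> 1" and rsq: "r\<^sup>2 = (x 0)\<^sup>2 + (x 1)\<^sup>2"
    using s1 by (simp_all add: r_def radius_def real_sqrt_le_1_iff)
  show ?thesis
  proof (cases "r = 0")
    case True
    then have "x = planar 0 0" using rsq z by (intro planar_eqI) (simp_all add: sum_power2_eq_zero_iff)
    then show ?thesis using that[of 0 0 0] m by simp
  next
    case False
    then have rp: "r > 0" using r0 by simp
    have "(x 0 / r)\<^sup>2 + (x 1 / r)\<^sup>2 = ((x 0)\<^sup>2 + (x 1)\<^sup>2) / r\<^sup>2"
      by (simp add: power_divide add_divide_distrib)
    also have "\<dots> = 1" unfolding rsq[symmetric] using rp by simp
    finally have "(x 0 / r)\<^sup>2 + (x 1 / r)\<^sup>2 = 1" .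
    then obtain \<theta> where th: "0 \<le> \<theta>" "\<theta> < 2 * pi" "x 0 / r = cos \<theta>" "x 1 / r = sin \<theta>"
      by (rule sincos_total_2pi)
    define s where "s = real m * \<theta> / (2 * pi)"
    have s0: "0 \<le> s" and sm: "s < real m" using th m by (auto simp: s_def divide_less_eq)
    define n where "n = nat \<lfloor>s\<rfloor>"
    have "real n \<le> s" "s < real n + 1" using s0 by (simp_all add: n_def)
    moreover have "arc_angle m n (s - real n) = \<theta>" using m by (simp add: arc_angle_def s_def)
    moreover have "x = planar (r * cos \<theta>) (r * sin \<theta>)"
      using th rp z by (intro planar_eqI) (simp_all add: field_simps)
    ultimately show ?thesis using that[of r n "s - real n"] r0 r1 sm by auto
  qed
qed

lemma disc_2_polar_iff:
  assumes m: "1 \<le> m"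
  shows "x \<in> closed_disc 2 \<longleftrightarrow> (\<exists>r n t. 0 \<le> r \<and> r \<le> 1 \<and> n < m \<and> 0 \<le> t \<and> t < 1 \<and>
           x = planar (r * cos (arc_angle m n t)) (r * sin (arc_angle m n t)))" (is "?C \<longleftrightarrow> ?C'")
    and "x \<in> open_disc 2 \<longleftrightarrow> (\<exists>r n t. 0 \<le> r \<and> r < 1 \<and> n < m \<and> 0 \<le> t \<and> t < 1 \<and>
           x = planar (r * cos (arc_angle m n t)) (r * sin (arc_angle m n t)))" (is "?O \<longleftrightarrow> ?O'")
proof -
  have "?C \<Longrightarrow> ?C'" by (erule closed_disc_2_polar[OF _ m]) blast
  moreover have "?C' \<Longrightarrow> ?C" using planar_polar_in_disc(1) by auto
  moreover have "?O \<Longrightarrow> ?O'"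
  proof -
    assume "?O"
    then have "?C" using open_disc_subset_closed_disc by blast
    then obtain r n t where "0 \<le> r" "n < m" "0 \<le> t" "t < 1"
      and x: "x = planar (r * cos (arc_angle m n t)) (r * sin (arc_angle m n t))"
      by (rule closed_disc_2_polar[OF _ m])
    moreover have "r < 1" using \<open>?O\<close> planar_polar_in_disc(2)[OF \<open>0 \<le> r\<close>] x by simp
    ultimately show ?O' by blast
  qed
  moreover have "?O' \<Longrightarrow> ?O" using planar_polar_in_disc(2) by auto
  ultimately show "?C \<longleftrightarrow> ?C'" "?O \<longleftrightarrow> ?O'" by blast+
qed

lemma arccos_cos_eq_min:
  assumes "\<bar>\<phi>\<bar> \<le> 2 * pi"
  shows "arccos (cos \<phi>) = min \<bar>\<phi>\<bar> (2 * pi - \<bar>\<phi>\<bar>)"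
proof (cases "\<bar>\<phi>\<bar> \<le> pi")
  case True
  then show ?thesis using arccos_cos_eq_abs by simp
next
  case False
  have "arccos (cos (2 * pi - \<bar>\<phi>\<bar>)) = 2 * pi - \<bar>\<phi>\<bar>"
    using False assms by (intro arccos_cos) auto
  then show ?thesis using False by simp
qed

text \<open>A hat function of the angular distance to \<open>2\<pi>j/m\<close>, vanishing from the neighbouring
  division points on.  Clamping keeps the argument of \<^const>\<open>arccos\<close> in \<open>[-1, 1]\<close>, where
  it is continuous.\<close>

definition circle_hat :: "nat \<Rightarrow> nat \<Rightarrow> real \<Rightarrow> real \<Rightarrow> real" where
  "circle_hat m j u v = max 0 (1 - real m / (2 * pi) *
     arccos (max (-1) (min 1 (u * cos (2 * pi * real j / real m) + v * sin (2 * pi * real j / real m)))))"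

lemma continuous_circle_hat: "continuous_on UNIV (\<lambda>p. circle_hat m j (fst p) (snd p))"
  unfolding circle_hat_def by (intro continuous_intros) auto

lemma circle_hat_bound: "\<bar>circle_hat m j u v\<bar> \<le> 1"
proof -
  have "arccos (max (-1) (min 1 w)) \<ge> 0" for w by (intro arccos_lbound) auto
  then show ?thesis unfolding circle_hat_def by (smt (verit) divide_nonneg_nonneg mult_nonneg_nonneg
      of_nat_0_le_iff pi_ge_zero)
qed

lemma cyclic_tent_value:
  fixes t :: real
  assumes m: "2 \<le> m" and n: "n < m" and j: "j < m" and t: "0 \<le> t" "t < 1"
  defines "D \<equiv> \<bar>real n + t - real j\<bar>"
  shows "max 0 (1 - min D (real m - D)) = (if j = n then 1 - t else if j = Suc n mod m then t else 0)"
proof -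
  consider "j = n" | "j = Suc n" | "j = 0" "Suc n = m" | "j \<noteq> n" "j \<noteq> Suc n" "\<not> (j = 0 \<and> Suc n = m)"
    by blast
  then show ?thesis
  proof cases
    case 1
    then show ?thesis using t m by (simp add: D_def min_def max_def)
  next
    case 2
    then show ?thesis using t j by (simp add: D_def min_def max_def)
  next
    case 3
    then have "D = real m - 1 + t" using t by (simp add: D_def of_nat_diff)
    then show ?thesis using 3 t m by (simp add: min_def max_def)
  next
    case 4
    then have "j \<noteq> Suc n mod m" using n by (metis Suc_lessI mod_less mod_self)
    have "1 \<le> D \<and> 1 \<le> real m - D"
    proof (cases "n < j")
      case True
      then show ?thesis using 4 t j by (simp add: D_def abs_if)
    next
      case False
      then show ?thesis using 4 t n by (cases "j = 0") (simp_all add: D_def abs_if)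
    qed
    then show ?thesis using 4 \<open>j \<noteq> Suc n mod m\<close> by (simp add: min_def max_def)
  qed
qed

lemma circle_hat_arc_angle:
  assumes m: "2 \<le> m" and n: "n < m" and j: "j < m" and t: "0 \<le> t" "t < 1"
  shows "circle_hat m j (cos (arc_angle m n t)) (sin (arc_angle m n t)) =
           (if j = n then 1 - t else if j = Suc n mod m then t else 0)"
proof -
  define D where "D = \<bar>real n + t - real j\<bar>"
  define \<phi> where "\<phi> = 2 * pi * (real n + t - real j) / real m"
  have mpos: "real m > 0" using m by simp
  have cos_\<phi>: "cos (arc_angle m n t) * cos (2 * pi * real j / real m)
          + sin (arc_angle m n t) * sin (2 * pi * real j / real m) = cos \<phi>"
    unfolding \<phi>_def arc_angle_def cos_diff[symmetric] by (simp add: diff_divide_distrib algebra_simps)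
  have abs_\<phi>: "\<bar>\<phi>\<bar> = 2 * pi * D / real m"
    using mpos by (simp add: \<phi>_def D_def abs_mult abs_divide)
  have "D \<le> real m" using n j t by (simp add: D_def abs_if)
  then have "\<bar>\<phi>\<bar> \<le> 2 * pi" using mpos by (simp add: abs_\<phi> divide_le_eq)
  then have "arccos (cos \<phi>) = min (2 * pi * D / real m) (2 * pi - 2 * pi * D / real m)"
    using arccos_cos_eq_min abs_\<phi> by simp
  also have "\<dots> = 2 * pi / real m * min D (real m - D)"
    using mpos by (simp add: min_def field_simps)
  finally have "circle_hat m j (cos (arc_angle m n t)) (sin (arc_angle m n t)) =
      max 0 (1 - min D (real m - D))"
    using mpos cos_\<phi> by (simp add: circle_hat_def)
  then show ?thesis using cyclic_tent_value[OF assms] by (simp add: D_def)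
qed

text \<open>The disc is mapped onto the cone with apex \<open>e\<^sub>a\<close> over the closed polygon
  \<open>e\<^bsub>P 0\<^esub>, \<dots>, e\<^bsub>P (m - 1)\<^esub>\<close>: the radius moves from the apex to the polygon and the angle
  runs around the polygon.\<close>

definition cone_map :: "nat \<Rightarrow> nat \<Rightarrow> (nat \<Rightarrow> nat) \<Rightarrow> (nat \<Rightarrow> real) \<Rightarrow> nat \<Rightarrow> real" where
  "cone_map m a P x = (\<lambda>i. (1 - radius x) * basis_vec a i +
     (\<Sum>j<m. radius x * circle_hat m j (x 0 / radius x) (x 1 / radius x) * basis_vec (P j) i))"

definition cone_point :: "nat \<Rightarrow> nat \<Rightarrow> (nat \<Rightarrow> nat) \<Rightarrow> real \<Rightarrow> nat \<Rightarrow> real \<Rightarrow> nat \<Rightarrow> real" where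
  "cone_point m a P r n t = (\<lambda>i. (1 - r) * basis_vec a i +
     r * ((1 - t) * basis_vec (P n) i + t * basis_vec (P (Suc n mod m)) i))"

lemma continuous_on_cone_map: "continuous_on S (cone_map m a P)"
proof -
  have "continuous_on S (\<lambda>x. radius x * circle_hat m j (x 0 / radius x) (x 1 / radius x))" for j
    by (rule continuous_on_homogeneous_extension[OF continuous_circle_hat circle_hat_bound])
  then show ?thesis unfolding cone_map_def
    by (intro continuous_on_coordinatewise_then_product continuous_on_add continuous_on_sum
        continuous_on_mult_right continuous_on_diff continuous_on_const continuous_on_radius)
qed

lemma cone_map_polar:
  assumes r: "0 \<le> r" and m: "2 \<le> m" and n: "n < m" and t: "0 \<le> t" "t < 1"
  shows "cone_map m a P (planar (r * cos (arc_angle m n t)) (r * sin (arc_angle m n t))) =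
           cone_point m a P r n t"
proof (cases "r = 0")
  case True
  then show ?thesis by (simp add: cone_map_def cone_point_def radius_def planar_def)
next
  case False
  have n': "n \<noteq> Suc n mod m" "Suc n mod m < m"
    using n m by (auto simp: mod_Suc)
  show ?thesis
  proof
    fix i
    have "(\<Sum>j<m. r * circle_hat m j (cos (arc_angle m n t)) (sin (arc_angle m n t)) * basis_vec (P j) i)
        = (\<Sum>j<m. (if j = n then r * (1 - t) * basis_vec (P n) i else 0)
                 + (if j = Suc n mod m then r * t * basis_vec (P (Suc n mod m)) i else 0))"
      by (rule sum.cong) (use circle_hat_arc_angle[OF m n _ t] n' in auto)
    also have "\<dots> = r * (1 - t) * basis_vec (P n) i + r * t * basis_vec (P (Suc n mod m)) i"
      using n n' by (simp add: sum.distrib)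
    finally show "cone_map m a P (planar (r * cos (arc_angle m n t)) (r * sin (arc_angle m n t))) i =
        cone_point m a P r n t i"
      unfolding cone_map_def cone_point_def radius_planar_polar[OF r]
      using False by (simp add: planar_def algebra_simps)
  qed
qed

lemma cone_map_image_disc:
  assumes m: "2 \<le> m"
  shows "cone_map m a P ` closed_disc 2 =
           {cone_point m a P r n t | r n t. 0 \<le> r \<and> r \<le> 1 \<and> n < m \<and> 0 \<le> t \<and> t < 1}"
    and "cone_map m a P ` open_disc 2 =
           {cone_point m a P r n t | r n t. 0 \<le> r \<and> r < 1 \<and> n < m \<and> 0 \<le> t \<and> t < 1}"
proof -
  define pol where "pol r n t = planar (r * cos (arc_angle m n t)) (r * sin (arc_angle m n t))" for r n t
  have "cone_map m a P (pol r n t) = cone_point m a P r n t"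
    if "0 \<le> r" "n < m" "0 \<le> t" "t < 1" for r n t
    unfolding pol_def using cone_map_polar m that by blast
  then show "cone_map m a P ` closed_disc 2 =
           {cone_point m a P r n t | r n t. 0 \<le> r \<and> r \<le> 1 \<and> n < m \<and> 0 \<le> t \<and> t < 1}"
    and "cone_map m a P ` open_disc 2 =
           {cone_point m a P r n t | r n t. 0 \<le> r \<and> r < 1 \<and> n < m \<and> 0 \<le> t \<and> t < 1}"
    using disc_2_polar_iff[of m] m unfolding pol_def[symmetric]
    by (auto simp: image_iff) (metis less_eq_real_def)+
qed

lemma cone_map_image_closed_disc_eq:
  assumes "2 \<le> m"
  shows "cone_map m a P ` closed_disc 2 =
           cone_map m a P ` open_disc 2 \<union> {cone_point m a P 1 n t | n t. n < m \<and> 0 \<le> t \<and> t < 1}"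
  unfolding cone_map_image_disc[OF assms] by (auto simp: less_eq_real_def) force+

lemma cone_point_apex: "a \<notin> P ` {..<m} \<Longrightarrow> n < m \<Longrightarrow> cone_point m a P r n t a = 1 - r"
  by (auto simp: cone_point_def basis_vec_def)

lemma cone_point_vertex:
  assumes "inj_on P {..<m}" "a \<notin> P ` {..<m}" "n < m" "j < m"
  shows "cone_point m a P r n t (P j) = r * ((if j = n then 1 - t else 0) + (if j = Suc n mod m then t else 0))"
proof -
  have "Suc n mod m < m" using assms by simp
  then show ?thesis using assms by (auto simp: cone_point_def basis_vec_def dest: inj_onD)
qed

lemma cone_point_support: "cone_point m a P r n t i \<noteq> 0 \<Longrightarrow> i = a \<or> i = P n \<or> i = P (Suc n mod m)"
  by (auto simp: cone_point_def basis_vec_def split: if_splits)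

lemma Suc_mod_not_involutive:
  assumes "3 \<le> m" "n < m" "n' < m" "n = Suc n' mod m"
  shows "n' \<noteq> Suc n mod m"
proof -
  have "Suc k mod m = (if Suc k = m then 0 else Suc k)" if "k < m" for k
    using that by (simp add: mod_Suc)
  then show ?thesis using assms by (cases "Suc n = m"; cases "Suc n' = m") auto
qed

lemma cone_point_inj:
  assumes P: "inj_on P {..<m}" "a \<notin> P ` {..<m}" and m: "3 \<le> m"
    and n: "n < m" "n' < m" and t: "0 \<le> t" "t < 1" "0 \<le> t'" "t' < 1"
    and eq: "cone_point m a P r n t = cone_point m a P r' n' t'"
  shows "r = r' \<and> (r = 0 \<or> (n = n' \<and> t = t'))"
proof -
  have rr: "r = r'"
    using fun_cong[OF eq, of a] cone_point_apex[OF P(2)] n by simp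
  have nn: "n \<noteq> Suc n mod m" "n' \<noteq> Suc n' mod m" using n m by (auto simp: mod_Suc)
  have "n = n' \<and> t = t'" if r0: "r \<noteq> 0"
  proof -
    have A: "1 - t = (if n = n' then 1 - t' else 0) + (if n = Suc n' mod m then t' else 0)"
      using fun_cong[OF eq, of "P n"] cone_point_vertex[OF P] n nn rr r0 by simp
    have B: "(if n' = n then 1 - t else 0) + (if n' = Suc n mod m then t else 0) = 1 - t'"
      using fun_cong[OF eq, of "P n'"] cone_point_vertex[OF P] n nn rr r0 by simp
    show ?thesis
    proof (rule ccontr)
      assume "\<not> (n = n' \<and> t = t')"
      then have "n \<noteq> n'" using A nn by auto
      then have "n = Suc n' mod m" "n' = Suc n mod m"
        using A B t by (auto split: if_splits)
      then show False using Suc_mod_not_involutive[OF m n] by blast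
    qed
  qed
  then show ?thesis using rr by blast
qed

lemma inj_on_cone_map:
  assumes m: "3 \<le> m" and P: "inj_on P {..<m}" "a \<notin> P ` {..<m}"
  shows "inj_on (cone_map m a P) (closed_disc 2)"
proof
  fix x y assume x: "x \<in> closed_disc 2" and y: "y \<in> closed_disc 2" and eq: "cone_map m a P x = cone_map m a P y"
  have m1: "1 \<le> m" using m by simp
  obtain r n t where rnt: "0 \<le> r" "r \<le> 1" "n < m" "0 \<le> t" "t < 1"
      "x = planar (r * cos (arc_angle m n t)) (r * sin (arc_angle m n t))"
    using closed_disc_2_polar[OF x m1] by blast
  obtain r' n' t' where rnt': "0 \<le> r'" "r' \<le> 1" "n' < m" "0 \<le> t'" "t' < 1"
      "y = planar (r' * cos (arc_angle m n' t')) (r' * sin (arc_angle m n' t'))"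
    using closed_disc_2_polar[OF y m1] by blast
  have "cone_point m a P r n t = cone_point m a P r' n' t'"
    using eq cone_map_polar[of r m n t] cone_map_polar[of r' m n' t'] rnt rnt' m by simp
  from cone_point_inj[OF P m rnt(3) rnt'(3) rnt(4,5) rnt'(4,5) this]
  show "x = y" using rnt(6) rnt'(6) by auto
qed

definition interleave :: "(nat \<Rightarrow> 'a) \<Rightarrow> (nat \<Rightarrow> 'a) \<Rightarrow> nat \<Rightarrow> 'a" where
  "interleave f g n = (if even n then f (n div 2) else g (n div 2))"

lemma interleave_image: "interleave f g ` {..<2 * k} = f ` {..<k} \<union> g ` {..<k}"
proof
  show "interleave f g ` {..<2 * k} \<subseteq> f ` {..<k} \<union> g ` {..<k}"
    by (auto simp: interleave_def)
  have "f j = interleave f g (2 * j)" "g j = interleave f g (2 * j + 1)" for j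
    by (simp_all add: interleave_def)
  moreover have "2 * j \<in> {..<2 * k}" "2 * j + 1 \<in> {..<2 * k}" if "j < k" for j
    using that by simp_all
  ultimately show "f ` {..<k} \<union> g ` {..<k} \<subseteq> interleave f g ` {..<2 * k}"
    by (metis (no_types, lifting) Un_subset_iff image_subsetI imageI lessThan_iff)
qed

lemma inj_on_interleave:
  assumes "inj_on f {..<k}" "inj_on g {..<k}" "f ` {..<k} \<inter> g ` {..<k} = {}"
  shows "inj_on (interleave f g) {..<2 * k}"
proof (rule inj_onI)
  fix n n' assume n: "n \<in> {..<2 * k}" "n' \<in> {..<2 * k}" and eq: "interleave f g n = interleave f g n'"
  then have "n div 2 < k" "n' div 2 < k" by auto
  then have "n div 2 = n' div 2 \<and> (even n \<longleftrightarrow> even n')"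
    using eq assms by (auto simp: interleave_def split: if_splits dest: inj_onD)
  then show "n = n'" by (metis div_mult_mod_eq mod2_eq_if)
qed

lemma cone_point_interleave:
  assumes "j < k"
  shows "0 \<le> t \<Longrightarrow> t \<le> 1 \<Longrightarrow> cone_point (2 * k) a (interleave V M) 1 (2 * j) t =
           broken_segment (V j) (M j) (V (Suc j mod k)) (t - 1)"
    and "0 \<le> t \<Longrightarrow> cone_point (2 * k) a (interleave V M) 1 (2 * j + 1) t =
           broken_segment (V j) (M j) (V (Suc j mod k)) t"
proof -
  have "Suc (2 * j) mod (2 * k) = 2 * j + 1" using assms by simp
  moreover have "Suc (2 * j + 1) mod (2 * k) = 2 * (Suc j mod k)"
    using mod_mult_mult1[of 2 "Suc j" k] by simp
  ultimately show "0 \<le> t \<Longrightarrow> t \<le> 1 \<Longrightarrow> cone_point (2 * k) a (interleave V M) 1 (2 * j) t =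
           broken_segment (V j) (M j) (V (Suc j mod k)) (t - 1)"
    and "0 \<le> t \<Longrightarrow> cone_point (2 * k) a (interleave V M) 1 (2 * j + 1) t =
           broken_segment (V j) (M j) (V (Suc j mod k)) t"
    by (auto simp: cone_point_def broken_segment_def interleave_def max_def abs_if)
qed

lemma cone_point_interleave_base:
  "{cone_point (2 * k) a (interleave V M) 1 n t | n t. n < 2 * k \<and> 0 \<le> t \<and> t < 1} =
     (\<Union>j<k. broken_segment (V j) (M j) (V (Suc j mod k)) ` {-1..<1})"
  (is "?L = ?R")
proof
  show "?L \<subseteq> ?R"
  proof
    fix y assume "y \<in> ?L"
    then obtain n t where n: "n < 2 * k" and t: "0 \<le> t" "t < 1"
      and y: "y = cone_point (2 * k) a (interleave V M) 1 n t" by blast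
    have j: "n div 2 < k" using n by simp
    show "y \<in> ?R"
    proof (cases "even n")
      case True
      then have "y = broken_segment (V (n div 2)) (M (n div 2)) (V (Suc (n div 2) mod k)) (t - 1)"
        using cone_point_interleave(1)[OF j, of t] t y by simp
      then show ?thesis using j t by force
    next
      case False
      then have "y = broken_segment (V (n div 2)) (M (n div 2)) (V (Suc (n div 2) mod k)) t"
        using cone_point_interleave(2)[OF j, of t] t y by (simp add: odd_two_times_div_two_succ)
      then show ?thesis using j t by force
    qed
  qed
  show "?R \<subseteq> ?L"
  proof
    fix y assume "y \<in> ?R"
    then obtain j u where j: "j < k" and u: "-1 \<le> u" "u < 1"
      and y: "y = broken_segment (V j) (M j) (V (Suc j mod k)) u" by auto
    show "y \<in> ?L"
    proof (cases "u < 0")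
      case True
      then have "y = cone_point (2 * k) a (interleave V M) 1 (2 * j) (u + 1)"
        using cone_point_interleave(1)[OF j, of "u + 1"] u y by simp
      moreover have "2 * j < 2 * k" using j by simp
      ultimately show ?thesis using True u by fastforce
    next
      case False
      then have "y = cone_point (2 * k) a (interleave V M) 1 (2 * j + 1) u"
        using cone_point_interleave(2)[OF j, of u] y by simp
      moreover have "2 * j + 1 < 2 * k" using j by simp
      ultimately show ?thesis using False u by force
    qed
  qed
qed

text \<open>The end of each segment is the start of the next one.\<close>

lemma broken_segment_cycle_closed:
  assumes "0 < k"
  shows "(\<Union>j<k. broken_segment (V j) (M j) (V (Suc j mod k)) ` {-1..<1}) =
           (\<Union>j<k. broken_segment (V j) (M j) (V (Suc j mod k)) ` {-1..1})"
proof -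
  have "broken_segment (V j) (M j) (V (Suc j mod k)) 1 =
      broken_segment (V (Suc j mod k)) (M (Suc j mod k)) (V (Suc (Suc j mod k) mod k)) (-1)" for j
    by (simp add: broken_segment_ends)
  moreover have "Suc j mod k < k" "(-1::real) \<in> {-1..<1}" for j using assms by simp_all
  ultimately have "broken_segment (V j) (M j) (V (Suc j mod k)) 1 \<in>
      (\<Union>j<k. broken_segment (V j) (M j) (V (Suc j mod k)) ` {-1..<1})" for j
    by blast
  moreover have "{-1..1::real} = insert 1 {-1..<1}" by auto
  ultimately show ?thesis by auto
qed

section \<open>Faces of a graph with connection\<close>

lemma out_edges_mono: "F' \<subseteq> F \<Longrightarrow> out_edges F' src w \<subseteq> out_edges F src w"
  by (auto simp: out_edges_def)

lemma finite_out_edges: "finite F \<Longrightarrow> finite (out_edges F src w)"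
  by (simp add: out_edges_def)

text \<open>By regularity the subgraph contains all edges at its vertices; by connectedness it then
  reaches every vertex.\<close>

lemma regular_subgraph_eq:
  assumes fin: "finite F" and conn: "connected_on W F src tgt"
    and reg: "\<forall>w\<in>W. card (out_edges F src w) = i" and src: "\<forall>e\<in>F. src e \<in> W"
    and ne: "W' \<noteq> {}" and sub: "W' \<subseteq> W" "F' \<subseteq> F"
    and reg': "\<forall>w\<in>W'. card (out_edges F' src w) = i" and tgt': "\<forall>e\<in>F'. tgt e \<in> W'"
  shows "W' = W \<and> F' = F"
proof -
  have out_eq: "out_edges F' src w = out_edges F src w" if "w \<in> W'" for w
    using that sub reg reg' by (intro card_subset_eq finite_out_edges fin out_edges_mono) auto
  obtain w0 where w0: "w0 \<in> W'" using ne by blast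
  have "x \<in> W'" if "x \<in> W" for x
  proof -
    have "(w0, x) \<in> (edge_rel F src tgt)\<^sup>*"
      using conn w0 sub that by (auto simp: connected_on_def)
    then show ?thesis
    proof (induction rule: rtrancl_induct)
      case (step y z)
      then obtain g where "g \<in> F" "y = src g" "z = tgt g" by (auto simp: edge_rel_def)
      then have "g \<in> F'" using out_eq[OF step.IH] by (auto simp: out_edges_def)
      then show ?case using tgt' \<open>z = tgt g\<close> by blast
    qed (use w0 in simp)
  qed
  then have "W' = W" using sub by blast
  moreover have "F \<subseteq> F'"
    using out_eq src \<open>W' = W\<close> by (auto simp: out_edges_def)
  ultimately show ?thesis using sub by blast
qed

locale graph_with_connection =
  fixes V :: "'v set" and E :: "'e set" and src tgt :: "'e \<Rightarrow> 'v" and rv :: "'e \<Rightarrow> 'e"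
    and nabla :: "'e \<Rightarrow> 'e \<Rightarrow> 'e"
  assumes finite_V: "finite V" and finite_E: "finite E"
    and src_in: "e \<in> E \<Longrightarrow> src e \<in> V" and tgt_in: "e \<in> E \<Longrightarrow> tgt e \<in> V"
    and no_loop: "e \<in> E \<Longrightarrow> src e \<noteq> tgt e"
    and rv_in: "e \<in> E \<Longrightarrow> rv e \<in> E" and rv_rv: "e \<in> E \<Longrightarrow> rv (rv e) = e"
    and src_rv: "e \<in> E \<Longrightarrow> src (rv e) = tgt e" and tgt_rv: "e \<in> E \<Longrightarrow> tgt (rv e) = src e"
    and nabla_self: "e \<in> E \<Longrightarrow> nabla e e = rv e"
begin

abbreviation face :: "nat \<Rightarrow> 'v set \<times> 'e set \<Rightarrow> bool" where
  "face i \<equiv> is_face V E src tgt rv nabla i"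

abbreviation S2_faces :: "('v set \<times> 'e set) set" where
  "S2_faces \<equiv> S2 V E src tgt rv nabla"

lemma rv_neq:
  assumes "e \<in> E" shows "rv e \<noteq> e"
proof
  assume "rv e = e"
  then show False using no_loop[OF assms] src_rv[OF assms] by simp
qed

lemma faceD:
  assumes "face i (W, F)"
  shows "W \<subseteq> V" "F \<subseteq> E" "finite F" "W \<noteq> {}" "connected_on W F src tgt"
    and "\<And>e. e \<in> F \<Longrightarrow> src e \<in> W" "\<And>e. e \<in> F \<Longrightarrow> tgt e \<in> W" "\<And>e. e \<in> F \<Longrightarrow> rv e \<in> F"
    and "\<And>w. w \<in> W \<Longrightarrow> card (out_edges F src w) = i"
  using assms finite_subset[OF _ finite_E] unfolding is_face_def connected_on_def by (auto simp: Let_def)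

lemma face_subgraph_le:
  assumes p: "face i p" and q: "face j q" and le: "subgraph_le p q"
  shows "i \<le> j" and "i = j \<Longrightarrow> p = q"
proof -
  obtain W' F' W F where pq: "p = (W', F')" "q = (W, F)" by fastforce
  note P = faceD[OF p[unfolded pq]] and Q = faceD[OF q[unfolded pq]]
  have sub: "W' \<subseteq> W" "F' \<subseteq> F" using le by (simp_all add: pq subgraph_le_def)
  obtain w where w: "w \<in> W'" using P(4) by blast
  have "card (out_edges F' src w) \<le> card (out_edges F src w)"
    by (intro card_mono finite_out_edges Q(3) out_edges_mono sub(2))
  then show "i \<le> j" using P(9)[OF w] Q(9) w sub(1) by auto
  show "p = q" if "i = j"
    using regular_subgraph_eq[OF Q(3,5) _ _ P(4) sub _] P(7,9) Q(6,9) that by (auto simp: pq)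
qed

lemma face_valence_unique: "face i q \<Longrightarrow> face j q \<Longrightarrow> i = j"
  using face_subgraph_le(1)[of i q j q] face_subgraph_le(1)[of j q i q] by (simp add: subgraph_le_def)

definition vertex_face :: "'v \<Rightarrow> 'v set \<times> 'e set" where
  "vertex_face v = ({v}, {})"

definition edge_face :: "'e \<Rightarrow> 'v set \<times> 'e set" where
  "edge_face e = ({src e, tgt e}, {e, rv e})"

lemma edge_face_rv: "e \<in> E \<Longrightarrow> edge_face (rv e) = edge_face e"
  by (auto simp: edge_face_def src_rv tgt_rv rv_rv)

lemma face_vertex_face: "v \<in> V \<Longrightarrow> face 0 (vertex_face v)"
  by (simp add: is_face_def connected_on_def vertex_face_def out_edges_def)

lemma face_edge_face:
  assumes e: "e \<in> E" shows "face 1 (edge_face e)"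
proof -
  have "out_edges {e, rv e} src (src e) = {e}" "out_edges {e, rv e} src (tgt e) = {rv e}"
    using no_loop[OF e] src_rv[OF e] by (auto simp: out_edges_def)
  moreover have "(src e, tgt e) \<in> edge_rel {e, rv e} src tgt" "(tgt e, src e) \<in> edge_rel {e, rv e} src tgt"
    using e src_rv tgt_rv by (force simp: edge_rel_def)+
  ultimately show ?thesis
    using e src_in tgt_in rv_in src_rv[OF e] tgt_rv[OF e] nabla_self[OF e] nabla_self[OF rv_in[OF e]]
    by (auto simp: is_face_def connected_on_def edge_face_def Let_def rv_rv[OF e])
qed

lemma face_0_iff: "face 0 q \<longleftrightarrow> (\<exists>v\<in>V. q = vertex_face v)"
proof
  assume q: "face 0 q"
  obtain W F where WF: "q = (W, F)" by fastforce
  note D = faceD[OF q[unfolded WF]]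
  have "F = {}"
  proof (rule ccontr)
    assume "F \<noteq> {}"
    then obtain e where "e \<in> F" by blast
    then have "e \<in> out_edges F src (src e)" by (simp add: out_edges_def)
    then have "card (out_edges F src (src e)) \<noteq> 0"
      by (auto simp: card_0_eq[OF finite_out_edges[OF D(3)]])
    then show False using D(9)[OF D(6)[OF \<open>e \<in> F\<close>]] by simp
  qed
  moreover obtain v where v: "v \<in> W" using D(4) by blast
  moreover have "W \<subseteq> {v}"
    using D(5) v \<open>F = {}\<close> by (auto simp: connected_on_def edge_rel_def)
  ultimately show "\<exists>v\<in>V. q = vertex_face v" using D(1) WF by (auto simp: vertex_face_def)
qed (auto simp: face_vertex_face)

lemma face_1_iff: "face 1 q \<longleftrightarrow> (\<exists>e\<in>E. q = edge_face e)"
proof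
  assume q: "face 1 q"
  obtain W F where WF: "q = (W, F)" by fastforce
  note D = faceD[OF q[unfolded WF]]
  obtain w where "w \<in> W" using D(4) by blast
  then obtain e where "out_edges F src w = {e}" using D(9) card_1_singletonE by blast
  then have e: "e \<in> F" "src e = w" by (auto simp: out_edges_def)
  have "e \<in> E" using e(1) D(2) by blast
  have "subgraph_le (edge_face e) q"
    using e D \<open>w \<in> W\<close> by (auto simp: subgraph_le_def edge_face_def WF)
  then have "edge_face e = q" by (rule face_subgraph_le(2)[OF face_edge_face[OF \<open>e \<in> E\<close>] q]) simp
  then show "\<exists>e\<in>E. q = edge_face e" using \<open>e \<in> E\<close> by blast
qed (use face_edge_face in blast)

lemma S2_cases:
  assumes "q \<in> S2_faces"
  obtains (vertex) v where "v \<in> V" "q = vertex_face v"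
    | (edge) e where "e \<in> E" "q = edge_face e"
    | (polygon) "face 2 q"
proof -
  obtain i where "i \<le> 2" "face i q" using assms by (auto simp: S2_def)
  then consider "face 0 q" | "face 1 q" | "face 2 q" by (metis le_SucE le_zero_eq numeral_2_eq_2 One_nat_def)
  then show ?thesis
  proof cases
    case 1
    then show ?thesis using that(1) unfolding face_0_iff by blast
  next
    case 2
    then show ?thesis using that(2) unfolding face_1_iff by blast
  qed (rule that(3))
qed

end

section \<open>Faces of valence two are cycles\<close>

lemma finite_orbit_period:
  assumes inj: "inj_on f A" and closed: "f ` A \<subseteq> A" and fin: "finite A" and x: "x \<in> A"
  obtains k where "0 < k" "(f ^^ k) x = x" "inj_on (\<lambda>n. (f ^^ n) x) {..<k}"
proof -
  have orbit_in: "(f ^^ n) x \<in> A" for n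
    by (induction n) (use x closed in auto)
  have cancel: "(f ^^ (a + i)) x = (f ^^ (b + i)) x \<Longrightarrow> (f ^^ a) x = (f ^^ b) x" for a b i
    by (induction i) (auto simp: add_Suc_right dest: inj_onD[OF inj] intro: orbit_in)
  have "finite (range (\<lambda>n. (f ^^ n) x))"
    using fin orbit_in by (meson finite_subset image_subsetI)
  then have "\<not> inj (\<lambda>n. (f ^^ n) x)"
    using finite_imageD infinite_UNIV_nat by blast
  then obtain i j where "i \<noteq> j" "(f ^^ i) x = (f ^^ j) x"
    by (auto simp: inj_def)
  then have "(f ^^ (0 + min i j)) x = (f ^^ ((max i j - min i j) + min i j)) x"
    by (auto simp: min_def max_def)
  then have "(f ^^ 0) x = (f ^^ (max i j - min i j)) x" by (rule cancel)
  moreover have "0 < max i j - min i j" using \<open>i \<noteq> j\<close> by (simp add: min_def max_def)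
  ultimately have "\<exists>p. 0 < p \<and> (f ^^ p) x = x" by (metis funpow_0)
  define k where "k = (LEAST p. 0 < p \<and> (f ^^ p) x = x)"
  have "0 < k" "(f ^^ k) x = x"
    using LeastI_ex[OF \<open>\<exists>p. 0 < p \<and> (f ^^ p) x = x\<close>] by (simp_all add: k_def)
  moreover have "(f ^^ m) x \<noteq> x" if "0 < m" "m < k" for m
    using not_less_Least[of m "\<lambda>p. 0 < p \<and> (f ^^ p) x = x"] that by (simp add: k_def)
  then have "inj_on (\<lambda>n. (f ^^ n) x) {..<k}"
    using inj_on_funpow_least[OF \<open>(f ^^ k) x = x\<close>] by (simp add: lessThan_atLeast0)
  ultimately show ?thesis using that by blast
qed

lemma card_edges_regular:
  assumes "finite W" and "finite F" and "\<forall>e\<in>F. src e \<in> W" and "\<forall>w\<in>W. card (out_edges F src w) = i"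
  shows "card F = i * card W"
proof -
  have "F = (\<Union>w\<in>W. out_edges F src w)" using assms(3) by (auto simp: out_edges_def)
  moreover have "card (\<Union>w\<in>W. out_edges F src w) = (\<Sum>w\<in>W. card (out_edges F src w))"
    using assms(1,2) by (intro card_UN_disjoint) (auto simp: out_edges_def)
  ultimately show ?thesis using assms(4) by simp
qed

context graph_with_connection
begin

definition next_edge :: "'e set \<Rightarrow> 'e \<Rightarrow> 'e" where
  "next_edge F g = (THE g'. g' \<in> out_edges F src (tgt g) \<and> g' \<noteq> rv g)"

definition face_cycle :: "'v set \<Rightarrow> 'e set \<Rightarrow> nat \<Rightarrow> (nat \<Rightarrow> 'e) \<Rightarrow> bool" where
  "face_cycle W F k c \<longleftrightarrow> 2 \<le> k \<and> (\<forall>j<k. c j \<in> F \<and> tgt (c j) = src (c (Suc j mod k))) \<and>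
     inj_on (src \<circ> c) {..<k} \<and> inj_on (edge_face \<circ> c) {..<k} \<and>
     W = src ` c ` {..<k} \<and> F = c ` {..<k} \<union> rv ` c ` {..<k}"

context
  fixes W F assumes face2: "face 2 (W, F)"
begin

lemma out_edges_tgt_face2:
  assumes g: "g \<in> F"
  shows "out_edges F src (tgt g) = {next_edge F g, rv g}" and "next_edge F g \<noteq> rv g"
proof -
  note D = faceD[OF face2]
  have "card (out_edges F src (tgt g)) = 2" using D(7,9) g by blast
  then obtain x y where xy: "out_edges F src (tgt g) = {x, y}" "x \<noteq> y" by (meson card_2_iff)
  have "rv g \<in> out_edges F src (tgt g)" using D(2,8) g by (auto simp: out_edges_def src_rv)
  define g' where "g' = (if x = rv g then y else x)"
  have g': "out_edges F src (tgt g) = {g', rv g}" "g' \<noteq> rv g"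
    using xy \<open>rv g \<in> out_edges F src (tgt g)\<close> by (auto simp: g'_def)
  then have "next_edge F g = g'" unfolding next_edge_def by (intro the_equality) auto
  then show "out_edges F src (tgt g) = {next_edge F g, rv g}" and "next_edge F g \<noteq> rv g"
    using g' by simp_all
qed

lemma next_edge_in_face:
  assumes "g \<in> F" shows "next_edge F g \<in> F" and "src (next_edge F g) = tgt g"
  using out_edges_tgt_face2(1)[OF assms] by (auto simp: out_edges_def)

lemma next_edge_rv_next:
  assumes g: "g \<in> F" shows "next_edge F (rv (next_edge F g)) = rv g"
proof -
  note D = faceD[OF face2]
  define h where "h = next_edge F g"
  have h: "h \<in> F" "src h = tgt g" "h \<noteq> rv g" using next_edge_in_face[OF g] out_edges_tgt_face2(2)[OF g]
    by (simp_all add: h_def)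
  have "rv h \<in> F" "tgt (rv h) = tgt g" "rv (rv h) = h" using D(2,8) h by (auto simp: tgt_rv rv_rv)
  then have "out_edges F src (tgt g) = {next_edge F (rv h), h}" "next_edge F (rv h) \<noteq> h"
    using out_edges_tgt_face2[of "rv h"] by simp_all
  moreover have "rv g \<in> out_edges F src (tgt g)"
    using out_edges_tgt_face2(1)[OF g] by simp
  ultimately show ?thesis using h(3) by (auto simp: h_def)
qed

lemma inj_on_next_edge: "inj_on (next_edge F) F"
proof (rule inj_onI)
  fix g1 g2 assume "g1 \<in> F" "g2 \<in> F" "next_edge F g1 = next_edge F g2"
  then have "rv g1 = rv g2" using next_edge_rv_next by metis
  then show "g1 = g2" using faceD(2)[OF face2] \<open>g1 \<in> F\<close> \<open>g2 \<in> F\<close> rv_rv by (metis subsetD)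
qed

context
  fixes e0 k assumes e0: "e0 \<in> F" and k: "0 < k" and period: "(next_edge F ^^ k) e0 = e0"
    and inj_period: "inj_on (\<lambda>n. (next_edge F ^^ n) e0) {..<k}"
begin

definition orbit_edge :: "nat \<Rightarrow> 'e" where
  "orbit_edge n = (next_edge F ^^ n) e0"

lemma orbit_edge_Suc: "orbit_edge (Suc n) = next_edge F (orbit_edge n)"
  by (simp add: orbit_edge_def)

lemma orbit_edge_in: "orbit_edge n \<in> F"
  by (induction n) (simp_all add: orbit_edge_def e0 next_edge_in_face)

lemma orbit_edge_in_E: "orbit_edge n \<in> E"
  using orbit_edge_in faceD(2)[OF face2] by blast

lemma orbit_edge_mod: "orbit_edge (n mod k) = orbit_edge n"
  unfolding orbit_edge_def using period by (rule funpow_mod_eq)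

lemma tgt_orbit_edge: "tgt (orbit_edge n) = src (orbit_edge (Suc n))"
  using next_edge_in_face(2)[OF orbit_edge_in] by (simp add: orbit_edge_Suc)

lemma rv_orbit_edge_shift: "rv (orbit_edge (a + t)) = orbit_edge b \<Longrightarrow> rv (orbit_edge a) = orbit_edge (b + t)"
proof (induction t arbitrary: b)
  case (Suc t)
  have "rv (orbit_edge (a + t)) = next_edge F (rv (orbit_edge (Suc (a + t))))"
    using next_edge_rv_next[OF orbit_edge_in] by (simp add: orbit_edge_Suc)
  then have "rv (orbit_edge (a + t)) = orbit_edge (Suc b)" using Suc.prems by (simp add: orbit_edge_Suc)
  from Suc.IH[OF this] show ?case by (simp only: add_Suc_right add_Suc)
qed simp

text \<open>If the orbit met its own reversal, reflecting along the orbit would produce an edge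
  that is its own reverse or the reverse of its successor.\<close>

lemma rv_orbit_edge_neq: "rv (orbit_edge i) \<noteq> orbit_edge j"
proof
  assume r: "rv (orbit_edge i) = orbit_edge j"
  define N where "N = i + k * (j + 1)"
  have "N mod k = i mod k" unfolding N_def by (rule mod_mult_self2)
  then have "orbit_edge N = orbit_edge i" using orbit_edge_mod[of N] orbit_edge_mod[of i] by metis
  then have rN: "rv (orbit_edge N) = orbit_edge j" using r by simp
  have "1 * (j + 1) \<le> k * (j + 1)" using k by (intro mult_le_mono1) simp
  then have "j < N" by (simp add: N_def)
  show False
  proof (cases "even (N - j)")
    case True
    then obtain t where "N - j = 2 * t" by blast
    then have "N = (j + t) + t" using \<open>j < N\<close> by simp
    then have "rv (orbit_edge (j + t)) = orbit_edge (j + t)" using rv_orbit_edge_shift rN by metis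
    then show False using rv_neq[OF orbit_edge_in_E] by blast
  next
    case False
    then obtain t where "N - j = 2 * t + 1" by (rule oddE)
    then have "N = Suc (j + t) + t" using \<open>j < N\<close> by simp
    then have "rv (orbit_edge (Suc (j + t))) = orbit_edge (j + t)" using rv_orbit_edge_shift rN by metis
    then have "orbit_edge (Suc (j + t)) = rv (orbit_edge (j + t))" using rv_rv[OF orbit_edge_in_E] by metis
    then show False using out_edges_tgt_face2(2)[OF orbit_edge_in] by (simp add: orbit_edge_Suc)
  qed
qed

lemma inj_on_orbit_edge: "inj_on orbit_edge {..<k}"
  using inj_period by (simp add: orbit_edge_def[abs_def])

lemma orbit_edge_in_period: "orbit_edge n \<in> orbit_edge ` {..<k}"
  using orbit_edge_mod[of n] k by (metis imageI lessThan_iff mod_less_divisor)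

lemma face2_eq_orbit:
  shows "W = src ` orbit_edge ` {..<k}" and "F = orbit_edge ` {..<k} \<union> rv ` orbit_edge ` {..<k}"
proof -
  note D = faceD[OF face2]
  define W' where "W' = src ` orbit_edge ` {..<k}"
  define F' where "F' = orbit_edge ` {..<k} \<union> rv ` orbit_edge ` {..<k}"
  have sub: "W' \<subseteq> W" "F' \<subseteq> F"
    using orbit_edge_in D(6,8) by (auto simp: W'_def F'_def)
  have src_in_W': "src (orbit_edge n) \<in> W'" for n
    using orbit_edge_in_period[of n] by (auto simp: W'_def)
  have "out_edges F src w \<subseteq> F'" if "w \<in> W'" for w
  proof -
    obtain j where "w = src (orbit_edge j)" using \<open>w \<in> W'\<close> by (auto simp: W'_def)
    define p where "p = j + k - 1"
    have "Suc p = j + k" using k by (simp add: p_def)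
    then have "orbit_edge (Suc p) = orbit_edge j" using orbit_edge_mod[of "j + k"] orbit_edge_mod[of j] by simp
    then have "w = tgt (orbit_edge p)" using \<open>w = src (orbit_edge j)\<close> tgt_orbit_edge by simp
    then have "out_edges F src w = {orbit_edge (Suc p), rv (orbit_edge p)}"
      using out_edges_tgt_face2(1)[OF orbit_edge_in] by (simp add: orbit_edge_Suc)
    then show ?thesis using orbit_edge_in_period[of "Suc p"] orbit_edge_in_period[of p] by (auto simp: F'_def)
  qed
  then have out_eq: "out_edges F' src w = out_edges F src w" if "w \<in> W'" for w
    using that sub(2) by (auto simp: out_edges_def)
  have "W' = W \<and> F' = F"
  proof (rule regular_subgraph_eq[OF D(3,5) _ _ _ sub])
    show "\<forall>w\<in>W. card (out_edges F src w) = 2" "\<forall>e\<in>F. src e \<in> W" using D(6,9) by blast+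
    show "\<forall>w\<in>W'. card (out_edges F' src w) = 2" using out_eq sub(1) D(9) by auto
    show "\<forall>e\<in>F'. tgt e \<in> W'"
      using src_in_W' tgt_orbit_edge orbit_edge_in_E by (auto simp: F'_def tgt_rv)
    show "W' \<noteq> {}" using k by (auto simp: W'_def)
  qed
  then show "W = src ` orbit_edge ` {..<k}" and "F = orbit_edge ` {..<k} \<union> rv ` orbit_edge ` {..<k}"
    by (simp_all add: W'_def F'_def)
qed

lemma inj_on_src_orbit_edge: "inj_on (src \<circ> orbit_edge) {..<k}"
proof (rule eq_card_imp_inj_on)
  note D = faceD[OF face2]
  have "card F = 2 * card W"
    using D(3,6,9) finite_subset[OF D(1) finite_V] by (intro card_edges_regular) auto
  have "inj_on rv F" using D(2) rv_rv by (metis inj_on_inverseI subsetD)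
  moreover have "orbit_edge ` {..<k} \<subseteq> F" using orbit_edge_in by blast
  ultimately have "card (rv ` orbit_edge ` {..<k}) = card (orbit_edge ` {..<k})"
    by (intro card_image) (rule inj_on_subset)
  moreover have "orbit_edge ` {..<k} \<inter> rv ` orbit_edge ` {..<k} = {}"
    by (auto simp: rv_orbit_edge_neq[symmetric])
  ultimately have "card F = 2 * card (orbit_edge ` {..<k})"
    using face2_eq_orbit(2) card_Un_disjoint[of "orbit_edge ` {..<k}" "rv ` orbit_edge ` {..<k}"]
    by simp
  then show "card ((src \<circ> orbit_edge) ` {..<k}) = card {..<k}"
    using \<open>card F = 2 * card W\<close> face2_eq_orbit(1) inj_on_orbit_edge
    by (simp add: card_image image_comp)
qed simp

lemma inj_on_edge_face_orbit_edge: "inj_on (edge_face \<circ> orbit_edge) {..<k}"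
proof (rule inj_onI)
  fix i j assume "i \<in> {..<k}" "j \<in> {..<k}" "(edge_face \<circ> orbit_edge) i = (edge_face \<circ> orbit_edge) j"
  then have "{orbit_edge i, rv (orbit_edge i)} = {orbit_edge j, rv (orbit_edge j)}"
    by (simp add: edge_face_def)
  then have "orbit_edge i = orbit_edge j" using rv_orbit_edge_neq by (metis doubleton_eq_iff)
  then show "i = j" using inj_onD[OF inj_on_orbit_edge] \<open>i \<in> {..<k}\<close> \<open>j \<in> {..<k}\<close> by blast
qed

end

lemma face2_cycle: obtains k c where "face_cycle W F k c"
proof -
  note D = faceD[OF face2]
  obtain w where "w \<in> W" using D(4) by blast
  then have "out_edges F src w \<noteq> {}" using D(9) by force
  then obtain e0 where e0: "e0 \<in> F" by (auto simp: out_edges_def)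
  have "next_edge F ` F \<subseteq> F" using next_edge_in_face(1) by blast
  then obtain k where k: "0 < k" "(next_edge F ^^ k) e0 = e0" "inj_on (\<lambda>n. (next_edge F ^^ n) e0) {..<k}"
    using finite_orbit_period[OF inj_on_next_edge _ D(3) e0] by blast
  note orbit = orbit_edge_in[OF e0 k] tgt_orbit_edge[OF e0 k] orbit_edge_mod[OF e0 k]
    orbit_edge_Suc[of e0] orbit_edge_in_E[OF e0 k]
  have "k \<noteq> 1"
  proof
    assume "k = 1"
    then have "next_edge F e0 = e0" using k(2) by simp
    then show False using next_edge_in_face(2)[OF e0] no_loop D(2) e0 by force
  qed
  then have "2 \<le> k" using k(1) by simp
  moreover have "orbit_edge e0 j \<in> F \<and> tgt (orbit_edge e0 j) = src (orbit_edge e0 (Suc j mod k))" for j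
    using orbit by metis
  ultimately show ?thesis
    using that[of k "orbit_edge e0"] inj_on_src_orbit_edge[OF e0 k] inj_on_edge_face_orbit_edge[OF e0 k]
      face2_eq_orbit[OF e0 k] by (simp add: face_cycle_def)
qed

end

end

section \<open>The cells of \<open>S\<^sub>2\<close>\<close>

context graph_with_connection
begin

definition face_dim :: "'v set \<times> 'e set \<Rightarrow> nat" where
  "face_dim q = card (out_edges (snd q) src (SOME w. w \<in> fst q))"

lemma face_dim_eq: "face i q \<Longrightarrow> face_dim q = i"
proof -
  assume q: "face i q"
  obtain W F where WF: "q = (W, F)" by fastforce
  have "(SOME w. w \<in> W) \<in> W" using faceD(4)[OF q[unfolded WF]] by (simp add: some_in_eq)
  then show ?thesis using faceD(9)[OF q[unfolded WF]] by (simp add: face_dim_def WF)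
qed

definition some_face_cycle :: "'v set \<times> 'e set \<Rightarrow> nat \<times> (nat \<Rightarrow> 'e)" where
  "some_face_cycle q = (SOME (k, c). face_cycle (fst q) (snd q) k c)"

lemma face_cycle_some_face_cycle:
  assumes "face 2 q" shows "face_cycle (fst q) (snd q) (fst (some_face_cycle q)) (snd (some_face_cycle q))"
proof -
  obtain k c where "face_cycle (fst q) (snd q) k c"
    using face2_cycle[of "fst q" "snd q"] assms by auto
  then have "\<exists>p. (\<lambda>(k, c). face_cycle (fst q) (snd q) k c) p" by blast
  then show ?thesis unfolding some_face_cycle_def by (metis (mono_tags, lifting) someI_ex case_prod_beta)
qed

definition char_map :: "('v set \<times> 'e set \<Rightarrow> nat) \<Rightarrow> 'v set \<times> 'e set \<Rightarrow> (nat \<Rightarrow> real) \<Rightarrow> nat \<Rightarrow> real" where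
  "char_map \<iota> q = (case face_dim q of
       0 \<Rightarrow> (\<lambda>_. basis_vec (\<iota> q))
     | Suc 0 \<Rightarrow> (let e = SOME e. e \<in> snd q in
         (\<lambda>x. broken_segment (\<iota> (vertex_face (src e))) (\<iota> q) (\<iota> (vertex_face (tgt e))) (x 0)))
     | _ \<Rightarrow> (case some_face_cycle q of (k, c) \<Rightarrow>
         cone_map (2 * k) (\<iota> q) (interleave (\<lambda>j. \<iota> (vertex_face (src (c j)))) (\<lambda>j. \<iota> (edge_face (c j))))))"

lemma face_in_S2: "face i q \<Longrightarrow> i \<le> 2 \<Longrightarrow> q \<in> S2_faces"
  by (auto simp: S2_def)

lemma S2_face: "p \<in> S2_faces \<Longrightarrow> \<exists>i\<le>2. face i p"
  by (simp add: S2_def)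

lemma subgraph_le_refl: "subgraph_le q q"
  by (simp add: subgraph_le_def)

lemma S2_below_vertex:
  assumes v: "v \<in> V" shows "{p \<in> S2_faces. subgraph_le p (vertex_face v)} = {vertex_face v}"
  using face_subgraph_le[OF _ face_vertex_face[OF v]] S2_face face_in_S2[OF face_vertex_face[OF v]]
  by (fastforce simp: subgraph_le_refl)

lemma S2_below_edge:
  assumes e: "e \<in> E"
  shows "{p \<in> S2_faces. subgraph_le p (edge_face e)} = {vertex_face (src e), vertex_face (tgt e), edge_face e}"
proof -
  have "p = vertex_face (src e) \<or> p = vertex_face (tgt e) \<or> p = edge_face e"
    if p: "p \<in> S2_faces" and le: "subgraph_le p (edge_face e)" for p
  proof -
    obtain i where "i \<le> 1" "face i p"
      using S2_face[OF p] face_subgraph_le(1)[OF _ face_edge_face[OF e] le] by blast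
    then consider "face 0 p" | "face 1 p" by (metis le_Suc_eq le_zero_eq One_nat_def)
    then show ?thesis
    proof cases
      case 1
      then show ?thesis using le by (auto simp: face_0_iff vertex_face_def edge_face_def subgraph_le_def)
    next
      case 2
      then show ?thesis using face_subgraph_le(2)[OF _ face_edge_face[OF e] le] by blast
    qed
  qed
  moreover have "vertex_face (src e) \<in> S2_faces" "vertex_face (tgt e) \<in> S2_faces" "edge_face e \<in> S2_faces"
    using face_in_S2[OF face_vertex_face[OF src_in[OF e]]] face_in_S2[OF face_vertex_face[OF tgt_in[OF e]]]
      face_in_S2[OF face_edge_face[OF e]] by simp_all
  ultimately show ?thesis by (auto simp: subgraph_le_def vertex_face_def edge_face_def)
qed

lemma S2_below_polygon:
  assumes q: "face 2 q" and c: "face_cycle (fst q) (snd q) k c"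
  shows "{p \<in> S2_faces. subgraph_le p q} =
           insert q (\<Union>j<k. {p \<in> S2_faces. subgraph_le p (edge_face (c j))})"
proof -
  obtain W F where WF: "q = (W, F)" by fastforce
  note D = faceD[OF q[unfolded WF]]
  have cyc: "W = src ` c ` {..<k}" "F = c ` {..<k} \<union> rv ` c ` {..<k}" "\<And>j. j < k \<Longrightarrow> c j \<in> F"
    using c by (auto simp: face_cycle_def WF)
  have edge_le: "subgraph_le (edge_face (c j)) q" if "j < k" for j
    using D(6,7,8) cyc(3)[OF that] by (simp add: subgraph_le_def edge_face_def WF)
  have "\<exists>j<k. subgraph_le p (edge_face (c j))" if p: "p \<in> S2_faces" "subgraph_le p q" "p \<noteq> q" for p
  proof -
    obtain i where i: "i \<le> 2" "face i p" using S2_face[OF p(1)] by blast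
    then consider "face 0 p" | "face 1 p" using face_subgraph_le(2)[OF _ q p(2)] p(3)
      by (metis le_SucE le_zero_eq numeral_2_eq_2 One_nat_def)
    then show ?thesis
    proof cases
      case 1
      then obtain v where "p = vertex_face v" "v \<in> W" using p(2) by (auto simp: face_0_iff vertex_face_def subgraph_le_def WF)
      then show ?thesis using cyc(1) by (auto simp: vertex_face_def edge_face_def subgraph_le_def)
    next
      case 2
      then obtain g where "g \<in> E" "p = edge_face g" unfolding face_1_iff by blast
      moreover have "g \<in> F" using p(2) calculation(2) by (simp add: subgraph_le_def edge_face_def WF)
      ultimately obtain j where j: "j < k" "g = c j \<or> g = rv (c j)" "p = edge_face g"
        using cyc(2) by blast
      then have "p = edge_face (c j)" using edge_face_rv cyc(3) D(2) by auto
      then show ?thesis using j(1) subgraph_le_refl by blast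
    qed
  qed
  moreover have "subgraph_le p q" if "subgraph_le p (edge_face (c j))" "j < k" for p j
    using that edge_le[OF that(2)] unfolding subgraph_le_def by blast
  moreover have "q \<in> S2_faces" using face_in_S2[OF q] by simp
  ultimately show ?thesis using subgraph_le_refl by blast
qed

lemma vertex_face_in_S2: "v \<in> V \<Longrightarrow> vertex_face v \<in> S2_faces"
  using face_in_S2[OF face_vertex_face] by simp

lemma edge_face_in_S2: "e \<in> E \<Longrightarrow> edge_face e \<in> S2_faces"
  using face_in_S2[OF face_edge_face] by simp

lemma vertex_face_neq_edge_face: "vertex_face v \<noteq> edge_face e"
  by (simp add: vertex_face_def edge_face_def)

context
  fixes \<iota> :: "'v set \<times> 'e set \<Rightarrow> nat" assumes inj_\<iota>: "inj_on \<iota> S2_faces"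
begin

abbreviation marked :: "'v set \<times> 'e set \<Rightarrow> bool" where
  "marked q \<equiv> marked_cell S2_faces subgraph_le face_dim (char_map \<iota>) \<iota> q"

lemma label_eq_iff: "p \<in> S2_faces \<Longrightarrow> q \<in> S2_faces \<Longrightarrow> \<iota> p = \<iota> q \<longleftrightarrow> p = q"
  using inj_\<iota> by (auto dest: inj_onD)

lemma vertex_char_map:
  assumes v: "v \<in> V"
  shows "face_dim (vertex_face v) = 0"
    and "char_map \<iota> (vertex_face v) ` closed_disc 0 = {basis_vec (\<iota> (vertex_face v))}"
    and "char_map \<iota> (vertex_face v) ` open_disc 0 = {basis_vec (\<iota> (vertex_face v))}"
proof -
  show dim: "face_dim (vertex_face v) = 0" using face_dim_eq[OF face_vertex_face[OF v]] .
  then show "char_map \<iota> (vertex_face v) ` closed_disc 0 = {basis_vec (\<iota> (vertex_face v))}"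
    and "char_map \<iota> (vertex_face v) ` open_disc 0 = {basis_vec (\<iota> (vertex_face v))}"
    using zero_in_open_disc[of 0] by (auto simp: char_map_def closed_disc_0)
qed

lemma marked_vertex_face: "v \<in> V \<Longrightarrow> marked (vertex_face v)"
  using vertex_char_map[of v] S2_below_vertex[of v]
  by (auto simp: marked_cell_def closed_disc_0 basis_vec_def)

lemma edge_labels:
  assumes e: "e \<in> E"
  shows "\<iota> (vertex_face (src e)) \<noteq> \<iota> (edge_face e)" and "\<iota> (vertex_face (tgt e)) \<noteq> \<iota> (edge_face e)"
    and "\<iota> (vertex_face (src e)) \<noteq> \<iota> (vertex_face (tgt e))"
proof -
  have "vertex_face (src e) \<noteq> vertex_face (tgt e)" using no_loop[OF e] by (simp add: vertex_face_def)
  then show "\<iota> (vertex_face (src e)) \<noteq> \<iota> (edge_face e)" and "\<iota> (vertex_face (tgt e)) \<noteq> \<iota> (edge_face e)"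
    and "\<iota> (vertex_face (src e)) \<noteq> \<iota> (vertex_face (tgt e))"
    using label_eq_iff vertex_face_in_S2 edge_face_in_S2 src_in[OF e] tgt_in[OF e] e vertex_face_neq_edge_face
    by metis+
qed

lemma edge_char_map:
  assumes e: "e \<in> E"
  defines "seg \<equiv> broken_segment (\<iota> (vertex_face (src e))) (\<iota> (edge_face e)) (\<iota> (vertex_face (tgt e)))"
  shows "face_dim (edge_face e) = 1"
    and "char_map \<iota> (edge_face e) ` closed_disc 1 = seg ` {-1..1}"
    and "char_map \<iota> (edge_face e) ` open_disc 1 = seg ` {-1<..<1}"
    and "continuous_on (closed_disc 1) (char_map \<iota> (edge_face e))"
    and "inj_on (char_map \<iota> (edge_face e)) (closed_disc 1)"
proof -
  show dim: "face_dim (edge_face e) = 1" using face_dim_eq[OF face_edge_face[OF e]] .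
  define f where "f = (SOME f. f \<in> snd (edge_face e))"
  have "f \<in> snd (edge_face e)" unfolding f_def by (rule someI[of _ e]) (simp add: edge_face_def)
  then have "f = e \<or> f = rv e" by (simp add: edge_face_def)
  define seg' where
    "seg' = broken_segment (\<iota> (vertex_face (src f))) (\<iota> (edge_face e)) (\<iota> (vertex_face (tgt f)))"
  have seg': "seg' = seg \<or> seg' = seg \<circ> uminus"
    using \<open>f = e \<or> f = rv e\<close> unfolding seg'_def seg_def
    by (auto simp: src_rv[OF e] tgt_rv[OF e]
        broken_segment_reverse[of "\<iota> (vertex_face (tgt e))" "\<iota> (edge_face e)" "\<iota> (vertex_face (src e))"])
  have h: "char_map \<iota> (edge_face e) = seg' \<circ> (\<lambda>x. x 0)"
    using dim by (simp add: char_map_def f_def[symmetric] seg'_def Let_def o_def)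
  have "uminus ` {-1..1::real} = {-1..1}" "uminus ` {-1<..<1::real} = {-1<..<1}" by simp_all
  then have "seg' ` {-1..1} = seg ` {-1..1}" "seg' ` {-1<..<1} = seg ` {-1<..<1}"
    using seg' by (elim disjE; simp only: image_comp[symmetric])+
  then show "char_map \<iota> (edge_face e) ` closed_disc 1 = seg ` {-1..1}"
    and "char_map \<iota> (edge_face e) ` open_disc 1 = seg ` {-1<..<1}"
    unfolding h image_comp[symmetric] coordinate_0_image_disc_1 by simp_all
  have "continuous_on UNIV seg" unfolding seg_def by (rule continuous_on_broken_segment)
  moreover have "continuous_on UNIV (seg \<circ> uminus)"
    by (rule continuous_on_compose)
      (auto intro: continuous_on_minus continuous_on_id continuous_on_subset[OF calculation])
  ultimately have "continuous_on UNIV seg'" using seg' by (elim disjE) simp_all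
  then show "continuous_on (closed_disc 1) (char_map \<iota> (edge_face e))"
    unfolding h by (intro continuous_on_compose continuous_on_coordinate) (auto intro: continuous_on_subset)
  have "inj seg"
    unfolding seg_def using edge_labels[OF e] by (intro inj_broken_segment) auto
  then have "inj seg'" using seg' by (auto intro: inj_compose)
  then show "inj_on (char_map \<iota> (edge_face e)) (closed_disc 1)"
    unfolding h by (intro comp_inj_on inj_on_coordinate_0_closed_disc_1) (auto intro: inj_on_subset)
qed

lemma marked_edge_face:
  assumes e: "e \<in> E" shows "marked (edge_face e)"
proof -
  define a m b where "a = \<iota> (vertex_face (src e))" and "m = \<iota> (edge_face e)"
    and "b = \<iota> (vertex_face (tgt e))"
  note edge = edge_char_map[OF e, folded a_def m_def b_def]
  note below = S2_below_edge[OF e]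
  have "(\<Union>p\<in>{p \<in> S2_faces. subgraph_le p (edge_face e)}. char_map \<iota> p ` open_disc (face_dim p))
      = {basis_vec a, basis_vec b} \<union> broken_segment a m b ` {-1<..<1}"
    using vertex_char_map[OF src_in[OF e]] vertex_char_map[OF tgt_in[OF e]] edge
    by (auto simp: below a_def b_def)
  also have "\<dots> = broken_segment a m b ` {-1..1}"
  proof -
    have "{-1..1::real} = {-1, 1} \<union> {-1<..<1}" by auto
    then show ?thesis by (simp add: broken_segment_ends)
  qed
  finally have closed: "char_map \<iota> (edge_face e) ` closed_disc (face_dim (edge_face e)) =
      (\<Union>p\<in>{p \<in> S2_faces. subgraph_le p (edge_face e)}. char_map \<iota> p ` open_disc (face_dim p))"
    using edge by simp
  have "i \<in> \<iota> ` {p \<in> S2_faces. subgraph_le p (edge_face e)}" if "broken_segment a m b u i \<noteq> 0" for u i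
    using broken_segment_support[OF that] by (auto simp: below a_def m_def b_def)
  moreover have "broken_segment a m b u m \<noteq> 0" if "u \<in> {-1<..<1}" for u
    using that edge_labels[OF e] by (auto simp: broken_segment_middle a_def m_def b_def)
  ultimately show ?thesis
    using closed edge by (auto simp: marked_cell_def m_def)
qed

lemma polygon_char_map:
  assumes q: "face 2 q"
  obtains k c where "face_cycle (fst q) (snd q) k c" and "face_dim q = 2"
    and "char_map \<iota> q =
      cone_map (2 * k) (\<iota> q) (interleave (\<lambda>j. \<iota> (vertex_face (src (c j)))) (\<lambda>j. \<iota> (edge_face (c j))))"
  using face_cycle_some_face_cycle[OF q] face_dim_eq[OF q] that
  by (auto simp: char_map_def numeral_2_eq_2 split: prod.splits)

lemma polygon_labels:
  assumes q: "face 2 q" and c: "face_cycle (fst q) (snd q) k c"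
  defines "P \<equiv> interleave (\<lambda>j. \<iota> (vertex_face (src (c j)))) (\<lambda>j. \<iota> (edge_face (c j)))"
  shows "inj_on P {..<2 * k}" and "\<iota> q \<notin> P ` {..<2 * k}"
    and "P ` {..<2 * k} \<subseteq> \<iota> ` {p \<in> S2_faces. subgraph_le p q}"
proof -
  obtain W F where WF: "q = (W, F)" by fastforce
  have cE: "c j \<in> E" if "j < k" for j
    using c faceD(2)[OF q[unfolded WF]] that by (auto simp: face_cycle_def WF)
  have VS: "vertex_face (src (c j)) \<in> S2_faces" and ES: "edge_face (c j) \<in> S2_faces" if "j < k" for j
    using vertex_face_in_S2[OF src_in[OF cE]] edge_face_in_S2[OF cE] that by blast+
  have inj_src: "inj_on (src \<circ> c) {..<k}" and inj_edge: "inj_on (edge_face \<circ> c) {..<k}"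
    using c by (simp_all add: face_cycle_def)
  have "inj_on (\<lambda>j. \<iota> (vertex_face (src (c j)))) {..<k}"
    using inj_onD[OF inj_src] VS by (intro inj_onI) (simp add: label_eq_iff vertex_face_def)
  moreover have "inj_on (\<lambda>j. \<iota> (edge_face (c j))) {..<k}"
    using inj_onD[OF inj_edge] ES by (intro inj_onI) (simp add: label_eq_iff)
  moreover have "\<iota> (vertex_face (src (c i))) \<noteq> \<iota> (edge_face (c j))" if "i < k" "j < k" for i j
    using label_eq_iff[OF VS ES] that vertex_face_neq_edge_face by blast
  ultimately show "inj_on P {..<2 * k}"
    unfolding P_def by (intro inj_on_interleave) auto
  have "q \<noteq> vertex_face (src (c j))" "q \<noteq> edge_face (c j)" if "j < k" for j
    using face_valence_unique[OF q] face_vertex_face[OF src_in[OF cE[OF that]]] face_edge_face[OF cE[OF that]]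
    by force+
  moreover have qS: "q \<in> S2_faces" using face_in_S2[OF q] by simp
  ultimately show "\<iota> q \<notin> P ` {..<2 * k}"
    unfolding P_def interleave_image using label_eq_iff[OF qS VS] label_eq_iff[OF qS ES] by auto
  have "vertex_face (src (c j)) \<in> {p \<in> S2_faces. subgraph_le p q}"
    and "edge_face (c j) \<in> {p \<in> S2_faces. subgraph_le p q}" if "j < k" for j
    using S2_below_polygon[OF q c] S2_below_edge[OF cE[OF that]] that by blast+
  then show "P ` {..<2 * k} \<subseteq> \<iota> ` {p \<in> S2_faces. subgraph_le p q}"
    by (auto simp: P_def interleave_image)
qed

lemma polygon_closed_cell:
  assumes q: "face 2 q" and c: "face_cycle (fst q) (snd q) k c"
    and h: "char_map \<iota> q =
      cone_map (2 * k) (\<iota> q) (interleave (\<lambda>j. \<iota> (vertex_face (src (c j)))) (\<lambda>j. \<iota> (edge_face (c j))))"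
  shows "char_map \<iota> q ` closed_disc 2 =
           (\<Union>p\<in>{p \<in> S2_faces. subgraph_le p q}. char_map \<iota> p ` open_disc (face_dim p))"
proof -
  have "snd q \<subseteq> E" using faceD(2)[of 2 "fst q" "snd q"] q by simp
  then have k: "2 \<le> k" and cE: "\<And>j. j < k \<Longrightarrow> c j \<in> E"
    and next_src: "\<And>j. j < k \<Longrightarrow> tgt (c j) = src (c (Suc j mod k))"
    using c by (auto simp: face_cycle_def)
  have edge_closed: "char_map \<iota> (edge_face (c j)) ` closed_disc (face_dim (edge_face (c j))) =
      broken_segment (\<iota> (vertex_face (src (c j)))) (\<iota> (edge_face (c j)))
        (\<iota> (vertex_face (src (c (Suc j mod k))))) ` {-1..1}" if "j < k" for j
    using edge_char_map(1,2)[OF cE[OF that]] next_src[OF that] by simp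
  have "2 \<le> 2 * k" "0 < k" using k by simp_all
  then have "char_map \<iota> q ` closed_disc 2 = char_map \<iota> q ` open_disc 2 \<union>
      (\<Union>j<k. broken_segment (\<iota> (vertex_face (src (c j)))) (\<iota> (edge_face (c j)))
        (\<iota> (vertex_face (src (c (Suc j mod k))))) ` {-1..1})"
    unfolding h by (simp only: cone_map_image_closed_disc_eq cone_point_interleave_base
        broken_segment_cycle_closed[of k "\<lambda>j. \<iota> (vertex_face (src (c j)))" "\<lambda>j. \<iota> (edge_face (c j))"])
  also have "\<dots> = char_map \<iota> q ` open_disc 2 \<union>
      (\<Union>j<k. char_map \<iota> (edge_face (c j)) ` closed_disc (face_dim (edge_face (c j))))"
    using edge_closed by simp
  also have "\<dots> = char_map \<iota> q ` open_disc (face_dim q) \<union>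
      (\<Union>j<k. \<Union>p\<in>{p \<in> S2_faces. subgraph_le p (edge_face (c j))}. char_map \<iota> p ` open_disc (face_dim p))"
    using marked_edge_face[OF cE] face_dim_eq[OF q] by (simp add: marked_cell_def)
  finally show ?thesis
    unfolding S2_below_polygon[OF q c] UN_insert UN_UN_flatten .
qed

lemma marked_polygon:
  assumes q: "face 2 q" shows "marked q"
proof -
  obtain k c where c: "face_cycle (fst q) (snd q) k c" and dim: "face_dim q = 2"
    and h: "char_map \<iota> q =
      cone_map (2 * k) (\<iota> q) (interleave (\<lambda>j. \<iota> (vertex_face (src (c j)))) (\<lambda>j. \<iota> (edge_face (c j))))"
    using polygon_char_map[OF q] by blast
  define P where "P = interleave (\<lambda>j. \<iota> (vertex_face (src (c j)))) (\<lambda>j. \<iota> (edge_face (c j)))"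
  note labels = polygon_labels[OF q c, folded P_def]
  have k: "3 \<le> 2 * k" using c by (simp add: face_cycle_def)
  have q_below: "q \<in> {p \<in> S2_faces. subgraph_le p q}" using face_in_S2[OF q] by (simp add: subgraph_le_refl)
  have closed_img: "char_map \<iota> q ` closed_disc (face_dim q) =
      {cone_point (2 * k) (\<iota> q) P r n t | r n t. 0 \<le> r \<and> r \<le> 1 \<and> n < 2 * k \<and> 0 \<le> t \<and> t < 1}"
    and open_img: "char_map \<iota> q ` open_disc (face_dim q) =
      {cone_point (2 * k) (\<iota> q) P r n t | r n t. 0 \<le> r \<and> r < 1 \<and> n < 2 * k \<and> 0 \<le> t \<and> t < 1}"
    using cone_map_image_disc[of "2 * k"] k by (simp_all add: dim h P_def)
  show ?thesis unfolding marked_cell_def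
  proof (intro conjI ballI allI impI)
    show "continuous_on (closed_disc (face_dim q)) (char_map \<iota> q)"
      by (simp add: h continuous_on_cone_map)
    show "inj_on (char_map \<iota> q) (closed_disc (face_dim q))"
      using inj_on_cone_map[OF k labels(1,2)] by (simp add: dim h P_def)
    show "char_map \<iota> q ` closed_disc (face_dim q) =
        (\<Union>p\<in>{p \<in> S2_faces. subgraph_le p q}. char_map \<iota> p ` open_disc (face_dim p))"
      using polygon_closed_cell[OF q c h] by (simp add: dim)
  next
    fix y i assume "y \<in> char_map \<iota> q ` closed_disc (face_dim q)" "y i \<noteq> 0"
    then obtain r n t where "n < 2 * k" "cone_point (2 * k) (\<iota> q) P r n t i \<noteq> 0"
      unfolding closed_img by blast
    then show "i \<in> \<iota> ` {p \<in> S2_faces. subgraph_le p q}"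
      using cone_point_support labels(3) q_below k by fastforce
  next
    fix y assume "y \<in> char_map \<iota> q ` open_disc (face_dim q)"
    then obtain r n t where "r < 1" "n < 2 * k" "y = cone_point (2 * k) (\<iota> q) P r n t"
      unfolding open_img by blast
    then show "y (\<iota> q) \<noteq> 0" using cone_point_apex[OF labels(2)] by simp
  qed
qed

end

theorem is_cell_poset_of_regular_CW_S2: "is_cell_poset_of_regular_CW S2_faces subgraph_le"
proof -
  have "S2_faces \<subseteq> Pow V \<times> Pow E" by (auto simp: S2_def is_face_def Let_def)
  then have fin: "finite S2_faces" using finite_V finite_E by (meson finite_Pow_iff finite_SigmaI finite_subset)
  then obtain \<iota> :: "'v set \<times> 'e set \<Rightarrow> nat" where \<iota>: "inj_on \<iota> S2_faces"
    using finite_imp_inj_to_nat_seg by blast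
  have "marked_cells S2_faces subgraph_le face_dim (char_map \<iota>) \<iota>"
  proof
    show "p = q" if "subgraph_le p q" "subgraph_le q p" for p q
      using that by (auto simp: subgraph_le_def prod_eq_iff)
    show "marked_cell S2_faces subgraph_le face_dim (char_map \<iota>) \<iota> q" if "q \<in> S2_faces" for q
      using that by (cases rule: S2_cases) (auto intro: marked_vertex_face[OF \<iota>] marked_edge_face[OF \<iota>] marked_polygon[OF \<iota>])
  qed (use fin \<iota> in auto)
  then show ?thesis by (rule marked_cells.is_cell_poset)
qed

end

theorem lemma2p7:
  fixes V :: "'v set" and E :: "'e set" and src tgt :: "'e \<Rightarrow> 'v" and rv :: "'e \<Rightarrow> 'e"
    and n :: nat and nabla :: "'e \<Rightarrow> 'e \<Rightarrow> 'e" and alpha :: "'e \<Rightarrow> ('k::finite \<Rightarrow> int)"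
  assumes "abstract_gkm_graph V E src tgt rv n nabla alpha"
    and "gkm3 V E src alpha"
  shows "is_cell_poset_of_regular_CW (S2 V E src tgt rv nabla) subgraph_le"
proof -
  interpret graph_with_connection V E src tgt rv nabla
    using assms(1) by unfold_locales (auto simp: abstract_gkm_graph_def)
  show ?thesis by (rule is_cell_poset_of_regular_CW_S2)
qed

end
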